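(* Every $4$-long affine liner is Playfair and regular.
   Context: A liner is a set $X$ of points with a family of subsets called lines such that any two distinct points lie in a unique line and every line contains at least two points. For distinct $x,y$, $\overline{xy}$ is the line through them and $\overline{xx}:=\{x\}$. A set is flat if it contains $\overline{xy}$ for all its distinct points; $\overline A$ is the smallest flat containing $A$; the rank $\|A\|$ is the smallest cardinality of $B\subseteq X$ with $A\subseteq\overline B$; a plane is a flat of rank 3. For $A\subseteq X$ and $y\in X$ put $\overline{Ay}=\bigcup_{a\in A}\overline{ay}$. $X$ is $4$-long if every line has at least $4$ points. $X$ is affine if for all $o,x,y\in X$ and $p\in\overline{xy}\setminus\overline{ox}$ there exists $u\in\overline{oy}$ such that for every $v\in\overline{oy}$: $u=v$ iff $\overline{vp}\cap\overline{ox}=\varnothing$. $X$ is Playfair if for every plane $P$, line $L\subseteq P$ and point $x\in P\setminus L$ there is a unique line $\Lambda$ with $x\in\Lambda\subseteq P\setminus L$. $X$ is regular if for every flat $A\subseteq X$ and points $a\in A$, $b\in X\setminus A$, we have $\overline{A\cup\{b\}}=\bigcup_{y\in\overline{ab}}\overline{Ay}$. *)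

theory Defs
  imports Main
begin

definition liner :: "'a set \<Rightarrow> 'a set set \<Rightarrow> bool" where
  "liner X \<L> \<longleftrightarrow>
     (\<forall>L\<in>\<L>. L \<subseteq> X \<and> (\<exists>a b. a \<noteq> b \<and> a \<in> L \<and> b \<in> L)) \<and>
     (\<forall>x\<in>X. \<forall>y\<in>X. x \<noteq> y \<longrightarrow> (\<exists>!L. L \<in> \<L> \<and> x \<in> L \<and> y \<in> L))"

definition line :: "'a set set \<Rightarrow> 'a \<Rightarrow> 'a \<Rightarrow> 'a set" where
  "line \<L> x y = (if x = y then {x} else (THE L. L \<in> \<L> \<and> x \<in> L \<and> y \<in> L))"

definition flat :: "'a set \<Rightarrow> 'a set set \<Rightarrow> 'a set \<Rightarrow> bool" where
  "flat X \<L> A \<longleftrightarrow> A \<subseteq> X \<and> (\<forall>x\<in>A. \<forall>y\<in>A. x \<noteq> y \<longrightarrow> line \<L> x y \<subseteq> A)"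

definition hull :: "'a set \<Rightarrow> 'a set set \<Rightarrow> 'a set \<Rightarrow> 'a set" where
  "hull X \<L> A = \<Inter> {F. flat X \<L> F \<and> A \<subseteq> F}"

definition has_rank :: "'a set \<Rightarrow> 'a set set \<Rightarrow> 'a set \<Rightarrow> nat \<Rightarrow> bool" where
  "has_rank X \<L> A n \<longleftrightarrow>
     (\<exists>B. B \<subseteq> X \<and> finite B \<and> card B = n \<and> A \<subseteq> hull X \<L> B) \<and>
     (\<forall>B. B \<subseteq> X \<and> finite B \<and> A \<subseteq> hull X \<L> B \<longrightarrow> n \<le> card B)"

definition plane :: "'a set \<Rightarrow> 'a set set \<Rightarrow> 'a set \<Rightarrow> bool" where
  "plane X \<L> P \<longleftrightarrow> flat X \<L> P \<and> has_rank X \<L> P 3"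

definition cone :: "'a set set \<Rightarrow> 'a set \<Rightarrow> 'a \<Rightarrow> 'a set" where
  "cone \<L> A y = (\<Union>a\<in>A. line \<L> a y)"

definition four_long :: "'a set set \<Rightarrow> bool" where
  "four_long \<L> \<longleftrightarrow> (\<forall>L\<in>\<L>. infinite L \<or> 4 \<le> card L)"

definition affine_liner :: "'a set \<Rightarrow> 'a set set \<Rightarrow> bool" where
  "affine_liner X \<L> \<longleftrightarrow>
     (\<forall>z\<in>X. \<forall>x\<in>X. \<forall>y\<in>X. \<forall>p \<in> line \<L> x y - line \<L> z x.
        \<exists>u\<in>line \<L> z y. \<forall>v\<in>line \<L> z y.
          (u = v \<longleftrightarrow> line \<L> v p \<inter> line \<L> z x = {}))"

definition playfair :: "'a set \<Rightarrow> 'a set set \<Rightarrow> bool" where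
  "playfair X \<L> \<longleftrightarrow>
     (\<forall>P L x. plane X \<L> P \<and> L \<in> \<L> \<and> L \<subseteq> P \<and> x \<in> P - L \<longrightarrow>
        (\<exists>!\<Lambda>. \<Lambda> \<in> \<L> \<and> x \<in> \<Lambda> \<and> \<Lambda> \<subseteq> P - L))"

definition regular :: "'a set \<Rightarrow> 'a set set \<Rightarrow> bool" where
  "regular X \<L> \<longleftrightarrow>
     (\<forall>A a b. flat X \<L> A \<and> a \<in> A \<and> b \<in> X - A \<longrightarrow>
        hull X \<L> (A \<union> {b}) = (\<Union>y\<in>line \<L> a b. cone \<L> A y))"

end

theory Submission
  imports Defs
begin

text \<open>
  Two lines \<open>L\<close> and \<open>M\<close> crossing at \<open>e\<close> span the set \<open>joins L M\<close> of all points on lines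
  meeting both. The affine axiom, together with the fact that a line has a point avoiding any
  three given ones, shows that the line through \<open>e\<close> and any point of \<open>joins L M\<close> stays
  inside it. From this, \<open>joins L M\<close> is flat, equals \<open>joins N N'\<close> for any two lines crossing
  inside it, and contains no line missing both \<open>L\<close> and \<open>M\<close>; so parallels in it are unique.
  A plane of rank 3 is of this form, which gives the Playfair property.

  Regularity asks that \<open>joins A (join a b)\<close> be flat for a flat \<open>A\<close> and \<open>b \<notin> A\<close>. Any two of
  its points already lie in \<open>joins \<rho> D\<close> for \<open>D = join a b\<close> and a point, line or plane \<open>\<rho> \<subseteq> A\<close>
  through \<open>a\<close>, so the essential case is a plane \<open>\<rho>\<close> and a line \<open>D\<close> meeting it in one point
  \<open>m\<close>. Suppose \<open>t \<notin> joins \<rho> D\<close> lies on the line through \<open>w \<in> \<rho>\<close> and \<open>q0 \<in> joins \<rho> D\<close>.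
  Then there is a line \<open>k \<subseteq> \<rho>\<close> through \<open>w\<close> such that the planes \<open>\<sigma> p\<close> through \<open>t\<close>, \<open>p\<close> and a
  fixed \<open>y1 \<in> D - {m}\<close>, for \<open>p \<in> k\<close>, cut \<open>\<rho>\<close> in pairwise disjoint lines avoiding \<open>m\<close>. But
  the parallel to \<open>\<sigma> w \<inter> \<rho>\<close> through \<open>m\<close> meets \<open>k\<close> in some \<open>p\<close>, and must then be
  \<open>\<sigma> p \<inter> \<rho>\<close>.
\<close>

locale four_long_affine_liner =
  fixes X :: "'a set" and \<L> :: "'a set set"
  assumes liner: "liner X \<L>" and four_long: "four_long \<L>" and affine: "affine_liner X \<L>"
begin

abbreviation join :: "'a \<Rightarrow> 'a \<Rightarrow> 'a set" where
  "join x y \<equiv> line \<L> x y"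

subsection \<open>Lines\<close>

lemma line_subset: "L \<in> \<L> \<Longrightarrow> L \<subseteq> X"
  using liner unfolding liner_def by blast

lemma line_two_points:
  assumes "L \<in> \<L>"
  obtains a b where "a \<in> L" "b \<in> L" "a \<noteq> b"
  using conjunct1[OF liner[unfolded liner_def]] assms by blast

lemma line_other_point: "L \<in> \<L> \<Longrightarrow> \<exists>b\<in>L. b \<noteq> a"
  using liner unfolding liner_def by (metis (full_types))

lemma line_fourth_point:
  assumes "L \<in> \<L>" shows "\<exists>z\<in>L. z \<noteq> a \<and> z \<noteq> b \<and> z \<noteq> c"
proof (rule ccontr)
  assume "\<not> ?thesis"
  then have "L \<subseteq> {a, b, c}" by blast
  moreover have "card {a, b, c} \<le> 3"
    by (simp add: card_insert_if)
  ultimately have "finite L" "card L \<le> 3"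
    using finite_subset card_mono[of "{a, b, c}" L] by fastforce+
  with assms four_long show False unfolding four_long_def by fastforce
qed

lemma unique_line: "x \<in> X \<Longrightarrow> y \<in> X \<Longrightarrow> x \<noteq> y \<Longrightarrow> \<exists>!L. L \<in> \<L> \<and> x \<in> L \<and> y \<in> L"
  using liner unfolding liner_def by simp

lemma join_self [simp]: "join x x = {x}"
  by (simp add: line_def)

lemma join_line:
  assumes "x \<in> X" "y \<in> X" "x \<noteq> y"
  shows "join x y \<in> \<L>" "x \<in> join x y" "y \<in> join x y"
  using theI'[OF unique_line[OF assms]] assms(3) by (simp_all add: line_def)

lemmas join_in_lines = join_line(1)

lemma left_in_join [simp]: "x \<in> X \<Longrightarrow> y \<in> X \<Longrightarrow> x \<in> join x y"
  using join_line(2) by (cases "x = y") auto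

lemma right_in_join [simp]: "x \<in> X \<Longrightarrow> y \<in> X \<Longrightarrow> y \<in> join x y"
  using join_line(3) by (cases "x = y") auto

lemma join_commute: "join x y = join y x"
proof -
  have "(\<lambda>L. L \<in> \<L> \<and> x \<in> L \<and> y \<in> L) = (\<lambda>L. L \<in> \<L> \<and> y \<in> L \<and> x \<in> L)"
    by auto
  then show ?thesis unfolding line_def by simp
qed

lemma join_eq_line:
  assumes "L \<in> \<L>" "x \<in> L" "y \<in> L" "x \<noteq> y"
  shows "join x y = L"
proof -
  have "x \<in> X" "y \<in> X" using assms line_subset by auto
  then show ?thesis
    using the1_equality[OF unique_line] assms by (simp add: line_def)
qed

lemma lines_eq:
  assumes "L \<in> \<L>" "M \<in> \<L>" "a \<in> L" "a \<in> M" "b \<in> L" "b \<in> M" "a \<noteq> b"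
  shows "L = M"
  using join_eq_line assms by metis

lemma join_subset_X: "x \<in> X \<Longrightarrow> y \<in> X \<Longrightarrow> join x y \<subseteq> X"
  using join_in_lines line_subset by (cases "x = y") auto

lemma join_subset_line: "L \<in> \<L> \<Longrightarrow> a \<in> L \<Longrightarrow> b \<in> L \<Longrightarrow> join a b \<subseteq> L"
  using join_eq_line by (cases "a = b") auto

lemma join_eq_join:
  assumes "x \<in> X" "y \<in> X" "p \<in> join x y" "q \<in> join x y" "p \<noteq> q"
  shows "join p q = join x y"
  using assms join_eq_line join_in_lines by (cases "x = y") auto

lemma join_eq_join_left:
  "x \<in> X \<Longrightarrow> y \<in> X \<Longrightarrow> a \<in> join x y \<Longrightarrow> a \<noteq> x \<Longrightarrow> join x a = join x y"
  by (rule join_eq_join) auto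

lemma affine_unique_parallel:
  assumes "c \<in> X" "x \<in> X" "y \<in> X" "p \<in> join x y" "p \<notin> join c x"
  obtains u where "u \<in> join c y" "join u p \<inter> join c x = {}"
    "\<And>v. v \<in> join c y \<Longrightarrow> v \<noteq> u \<Longrightarrow> join v p \<inter> join c x \<noteq> {}"
  using affine assms unfolding affine_liner_def by (metis DiffI)

lemma flat_subset_X: "flat X \<L> F \<Longrightarrow> F \<subseteq> X"
  unfolding flat_def by blast

lemma flat_join: "flat X \<L> F \<Longrightarrow> a \<in> F \<Longrightarrow> b \<in> F \<Longrightarrow> join a b \<subseteq> F"
  unfolding flat_def by (cases "a = b") auto

lemma flat_line:
  assumes "x \<in> X" "y \<in> X"
  shows "flat X \<L> (join x y)"
  unfolding flat_def
proof (intro conjI ballI impI)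
  show "join x y \<subseteq> X" using join_subset_X assms .
  fix p q assume "p \<in> join x y" "q \<in> join x y" "p \<noteq> q"
  then show "join p q \<subseteq> join x y" using join_eq_join[OF assms] by blast
qed

lemma hull_subset: "S \<subseteq> hull X \<L> S"
  unfolding hull_def by blast

lemma hull_minimal: "flat X \<L> F \<Longrightarrow> S \<subseteq> F \<Longrightarrow> hull X \<L> S \<subseteq> F"
  unfolding hull_def by blast

lemma hull_flat:
  assumes "S \<subseteq> X"
  shows "flat X \<L> (hull X \<L> S)"
  unfolding flat_def
proof (intro conjI ballI impI)
  have "flat X \<L> X" unfolding flat_def using join_subset_X by blast
  then show "hull X \<L> S \<subseteq> X" using hull_minimal assms by blast
  fix x y assume "x \<in> hull X \<L> S" "y \<in> hull X \<L> S" "x \<noteq> y"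
  then show "join x y \<subseteq> hull X \<L> S"
    unfolding hull_def using flat_join by blast
qed

subsection \<open>The plane spanned by two crossing lines\<close>

text \<open>
  For crossing lines \<open>L\<close>, \<open>M\<close> this is the plane they span; \<open>joins A (join a b)\<close> is the
  union of cones on the right-hand side of \<^const>\<open>regular\<close>.
\<close>
definition joins :: "'a set \<Rightarrow> 'a set \<Rightarrow> 'a set" where
  "joins A B = (\<Union>a\<in>A. \<Union>b\<in>B. join a b)"

definition crossing :: "'a \<Rightarrow> 'a set \<Rightarrow> 'a set \<Rightarrow> bool" where
  "crossing e L M \<longleftrightarrow> L \<in> \<L> \<and> M \<in> \<L> \<and> L \<noteq> M \<and> e \<in> L \<and> e \<in> M"

lemma joinsI: "a \<in> A \<Longrightarrow> b \<in> B \<Longrightarrow> p \<in> join a b \<Longrightarrow> p \<in> joins A B"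
  unfolding joins_def by blast

lemma joinsE:
  assumes "p \<in> joins A B"
  obtains a b where "a \<in> A" "b \<in> B" "p \<in> join a b"
  using assms unfolding joins_def by blast

lemma joins_commute: "joins A B = joins B A"
  unfolding joins_def using join_commute by blast

lemma joins_mono: "A \<subseteq> A' \<Longrightarrow> B \<subseteq> B' \<Longrightarrow> joins A B \<subseteq> joins A' B'"
  unfolding joins_def by blast

lemma subset_joins: "A \<subseteq> X \<Longrightarrow> b \<in> B \<Longrightarrow> b \<in> X \<Longrightarrow> A \<subseteq> joins A B"
  using joinsI left_in_join by blast

lemma joins_subset_X: "A \<subseteq> X \<Longrightarrow> B \<subseteq> X \<Longrightarrow> joins A B \<subseteq> X"
  unfolding joins_def using join_subset_X by blast

lemma joins_subset_flat: "flat X \<L> F \<Longrightarrow> A \<subseteq> F \<Longrightarrow> B \<subseteq> F \<Longrightarrow> joins A B \<subseteq> F"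
  unfolding joins_def using flat_join by blast

lemma crossingD:
  assumes "crossing e L M"
  shows "L \<in> \<L>" "M \<in> \<L>" "L \<noteq> M" "e \<in> L" "e \<in> M" "e \<in> X"
  using assms line_subset unfolding crossing_def by auto

lemma crossing_commute: "crossing e L M \<Longrightarrow> crossing e M L"
  unfolding crossing_def by auto

lemma crossing_joins:
  assumes "e \<in> X" "x \<in> X" "y \<in> X" "e \<noteq> x" "y \<notin> join e x"
  shows "crossing e (join e x) (join e y)"
proof -
  have "e \<noteq> y" using assms by auto
  moreover have "join e x \<noteq> join e y" using assms right_in_join by blast
  ultimately show ?thesis
    using assms join_line[of e x] join_line[of e y] unfolding crossing_def by blast
qed

context
  fixes e L M
  assumes cross: "crossing e L M"
begin

lemma crossing_unique_point: "a \<in> L \<Longrightarrow> a \<in> M \<Longrightarrow> a = e"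
  using lines_eq[of L M a e] crossingD[OF cross] by blast

lemma lines_subset_joins: "L \<subseteq> joins L M" "M \<subseteq> joins L M"
  using subset_joins[of L e M] subset_joins[of M e L] joins_commute crossingD[OF cross]
    line_subset by auto

lemma joins_crossing_subset_X: "joins L M \<subseteq> X"
  using joins_subset_X line_subset crossingD[OF cross] by blast

lemma joins_off_lines_witness:
  assumes p: "p \<in> joins L M" "p \<notin> L" "p \<notin> M"
  obtains w v where "w \<in> L" "w \<noteq> e" "v \<in> M" "v \<noteq> e" "p \<in> join w v" "p \<noteq> w" "p \<noteq> v"
proof -
  obtain w v where wv: "w \<in> L" "v \<in> M" "p \<in> join w v" using p(1) by (rule joinsE)
  have "w \<noteq> v" using wv p by (metis join_self singletonD)
  have "w \<noteq> e"
  proof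
    assume "w = e"
    then have "join w v = M" using join_eq_line[OF crossingD(2,5)[OF cross] wv(2)] \<open>w \<noteq> v\<close> by simp
    then show False using wv(3) p(3) by simp
  qed
  moreover have "v \<noteq> e"
  proof
    assume "v = e"
    then have "join w v = L"
      using join_eq_line[OF crossingD(1)[OF cross] wv(1) crossingD(4)[OF cross]] \<open>w \<noteq> v\<close> by simp
    then show False using wv(3) p(2) by simp
  qed
  ultimately show thesis using wv p that by blast
qed

lemma vertex_join_off_lines:
  assumes "p \<in> X" "p \<notin> L" "p \<notin> M" "s \<in> join e p" "s \<noteq> e"
  shows "s \<notin> L" "s \<notin> M"
proof -
  note cr = crossingD[OF cross]
  have "join e s = join e p" using join_eq_join_left[OF cr(6)] assms by blast
  then show "s \<notin> L" "s \<notin> M"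
    using join_eq_line[OF cr(1,4)] join_eq_line[OF cr(2,5)] right_in_join[OF cr(6) assms(1)] assms
    by (metis)+
qed

lemma joins_of_line_meeting_both:
  assumes X: "h \<in> X" "s \<in> X" and e: "e \<notin> join h s"
    and l: "l \<in> join h s" "l \<in> L" and m: "m \<in> join h s" "m \<in> M"
  shows "s \<in> joins L M"
proof -
  have "l \<noteq> m" using l m e crossing_unique_point by blast
  then have "s \<in> join l m" using join_eq_join[OF X l(1) m(1)] X by simp
  then show ?thesis using joinsI l(2) m(2) by blast
qed

lemma join_vertex_subset_joins:
  assumes p: "p \<in> joins L M" "p \<notin> L" "p \<notin> M"
  shows "join e p \<subseteq> joins L M"
proof
  fix s assume s: "s \<in> join e p"
  obtain w v where w: "w \<in> L" "w \<noteq> e" and v: "v \<in> M" "v \<noteq> e"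
    and pwv: "p \<in> join w v" "p \<noteq> w" "p \<noteq> v"
    using joins_off_lines_witness[OF p] .
  note L = crossingD(1,4)[OF cross] and M = crossingD(2,5)[OF cross]
  have X: "e \<in> X" "p \<in> X" "w \<in> X" "v \<in> X" "s \<in> X"
    using p joins_crossing_subset_X crossingD(6)[OF cross] w v line_subset L M
      join_subset_X[of e p] s by blast+
  show "s \<in> joins L M"
  proof (cases "s = e \<or> s = p")
    case True then show ?thesis using p lines_subset_joins L by blast
  next
    case False
    define K where "K = join w v"
    have "w \<noteq> v" using pwv by auto
    then have K: "K \<in> \<L>" "w \<in> K" "v \<in> K" "p \<in> K" using join_line[of w v] X pwv K_def by auto
    have wp: "join w p = K" and vp: "join v p = K" using join_eq_line K pwv by auto
    have we: "join w e = L" and ve: "join v e = M" using join_eq_line L M w v by auto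
    have ep: "join e p \<in> \<L>" "p \<in> join e p" using join_line X p L by auto
    have "e \<notin> K"
    proof
      assume "e \<in> K"
      then have "K = L" using lines_eq[OF K(1) L(1) K(2) w(1) _ L(2) w(2)] by blast
      then show False using v K(3) w crossing_unique_point by blast
    qed
    have es: "join e s = join e p" using join_eq_join_left[OF X(1,2) s] False by simp
    have "s \<notin> L" "s \<notin> M" using vertex_join_off_lines[OF X(2) p(2,3) s] False by auto
    then have "s \<notin> join w e" "s \<notin> join v e" using we ve by auto
    then obtain uL uM where uL: "\<And>h. h \<in> K \<Longrightarrow> h \<noteq> uL \<Longrightarrow> join h s \<inter> L \<noteq> {}"
      and uM: "\<And>h. h \<in> K \<Longrightarrow> h \<noteq> uM \<Longrightarrow> join h s \<inter> M \<noteq> {}"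
      using affine_unique_parallel[OF X(3,1,2) s] affine_unique_parallel[OF X(4,1,2) s] wp vp we ve
      by metis
    obtain h where h: "h \<in> K" "h \<noteq> uL" "h \<noteq> uM" "h \<noteq> p"
      using line_fourth_point[OF K(1)] by blast
    have hX: "h \<in> X" using h(1) K(1) line_subset by blast
    have "e \<notin> join h s"
    proof
      assume "e \<in> join h s"
      then have "join h s = join e s"
        using join_eq_join[OF hX X(5) _ right_in_join[OF hX X(5)]] False by metis
      then have "h \<in> join e p" by (metis es left_in_join[OF hX X(5)])
      then show False using lines_eq[OF K(1) ep(1) h(1) _ K(4) ep(2) h(4)] \<open>e \<notin> K\<close> X(1,2) by simp
    qed
    then show ?thesis
      using joins_of_line_meeting_both[OF hX X(5)] uL[OF h(1,2)] uM[OF h(1,3)] by blast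
  qed
qed

lemma joins_parallel_point_unique:
  assumes p: "p \<in> joins L M" "p \<notin> L" "p \<notin> M"
    and w: "w \<in> L" "join w p \<inter> M = {}" and w': "w' \<in> L" "join w' p \<inter> M = {}"
  shows "w = w'"
proof -
  obtain w0 v0 where w0: "w0 \<in> L" "w0 \<noteq> e" and v0: "v0 \<in> M" "v0 \<noteq> e" and "p \<in> join w0 v0"
    using joins_off_lines_witness[OF p] .
  note L = crossingD(1,4,6)[OF cross] and M = crossingD(2,5)[OF cross]
  have X: "w0 \<in> X" "v0 \<in> X" using w0 v0 L M line_subset by auto
  have "join e w0 = L" "join e v0 = M" using join_eq_line L M w0 v0 by auto
  moreover have "p \<in> join v0 w0" using \<open>p \<in> join w0 v0\<close> join_commute by simp
  ultimately obtain g where "\<And>l. l \<in> L \<Longrightarrow> l \<noteq> g \<Longrightarrow> join l p \<inter> M \<noteq> {}"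
    using affine_unique_parallel[OF L(3) X(2,1)] p(3) by metis
  then show ?thesis using w w' by blast
qed

lemma parallel_join_subset_joins:
  assumes p: "p \<in> joins L M" "p \<notin> L" "p \<notin> M"
    and w: "w \<in> L" "w \<noteq> e" "join w p \<inter> M = {}"
    and s: "s \<in> join w p" "s \<noteq> w" "s \<noteq> p"
  shows "s \<in> joins L M"
proof -
  note L = crossingD(1,4,6)[OF cross]
  have X: "p \<in> X" "w \<in> X" "s \<in> X"
    using p(1) joins_crossing_subset_X w L line_subset join_subset_X s by blast+
  have ws: "join w s = join w p" using join_eq_join_left[OF X(2,1) s(1,2)] .
  have wL: "join w e = L" using join_eq_line[OF L(1) w(1) L(2) w(2)] .
  have "e \<notin> join w p"
    using lines_eq[OF join_in_lines[OF X(2,1)] L(1) _ w(1) _ L(2) w(2)] p(2) X w(1)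
      right_in_join[OF X(2,1)] by fastforce
  moreover have "join e p \<in> \<L>" "e \<in> join e p" "p \<in> join e p"
    using join_line L(3) X(1) p(2) L(2) by auto
  ultimately have sep: "s \<notin> join e p" and se: "s \<noteq> e"
    using lines_eq[OF join_in_lines[OF X(2,1)] _ s(1) _ right_in_join[OF X(2,1)] _ s(3)]
      p(2) w(1) s(1) by blast+
  have sL: "s \<notin> L" using join_eq_line[OF L(1) w(1)] ws p(2) s(2) right_in_join[OF X(2,1)] by metis
  have sM: "s \<notin> M" using w(3) s(1) by blast
  obtain u where u: "\<And>k. k \<in> join e s \<Longrightarrow> k \<noteq> u \<Longrightarrow> join k p \<inter> L \<noteq> {}"
  proof -
    have "p \<in> join w s" "p \<notin> join e w" using ws X wL join_commute[of e w] p(2) by auto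
    from affine_unique_parallel[OF L(3) X(2,3) this] that show thesis
      using wL join_commute[of e w] by auto
  qed
  obtain k where k: "k \<in> join e s" "k \<noteq> e" "k \<noteq> s" "k \<noteq> u"
    using line_fourth_point[OF join_in_lines[OF L(3) X(3)]] se by metis
  have kX: "k \<in> X" using k(1) join_subset_X[OF L(3) X(3)] by blast
  have ek: "join e k = join e s" using join_eq_join_left[OF L(3) X(3) k(1,2)] .
  obtain l where l: "l \<in> join k p" "l \<in> L" using u[OF k(1,4)] by blast
  have lk: "join l p = join k p"
    using join_eq_join[OF kX X(1) l(1) right_in_join[OF kX X(1)]] l(2) p(2) by blast
  have "l \<noteq> w"
  proof
    assume "l = w"
    then have "k \<in> join w p" using lk left_in_join[OF kX X(1)] by simp
    then have "join k s = join w p" using join_eq_join[OF X(2,1) _ s(1) k(3)] by simp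
    moreover have "join k s = join e s"
      using join_eq_join[OF L(3) X(3) k(1) right_in_join[OF L(3) X(3)] k(3)] .
    ultimately show False using \<open>e \<notin> join w p\<close> left_in_join[OF L(3) X(3)] by simp
  qed
  \<comment> \<open>\<open>w\<close> is the only point of \<open>L\<close> whose join with \<open>p\<close> misses \<open>M\<close>\<close>
  then obtain m where m: "m \<in> join k p" "m \<in> M"
    using joins_parallel_point_unique[OF p l(2) _ w(1,3)] lk by blast
  have "e \<notin> join k p"
  proof
    assume "e \<in> join k p"
    then have "join e p = join k p"
      using join_eq_join[OF kX X(1) _ right_in_join[OF kX X(1)]] p(2) L(2) by blast
    then have "k \<in> join e p" using left_in_join[OF kX X(1)] by simp
    then have "join e p = join e s" using join_eq_join_left[OF L(3) X(1) _ k(2)] ek by simp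
    then show False using sep right_in_join[OF L(3) X(3)] by simp
  qed
  then have "k \<in> joins L M"
    using joins_of_line_meeting_both[OF X(1) kX _ _ l(2) _ m(2)] l(1) m(1) join_commute[of k p]
    by simp
  moreover have "k \<notin> L" "k \<notin> M" using vertex_join_off_lines[OF X(3) sL sM k(1,2)] by auto
  ultimately show ?thesis using join_vertex_subset_joins ek right_in_join[OF L(3) X(3)] by blast
qed

lemma join_left_subset_joins:
  assumes p: "p \<in> joins L M" "p \<notin> L" "p \<notin> M" and w: "w \<in> L"
  shows "join w p \<subseteq> joins L M"
proof
  fix s assume s: "s \<in> join w p"
  have X: "p \<in> X" "w \<in> X"
    using p(1) joins_crossing_subset_X w crossingD(1)[OF cross] line_subset by blast+
  consider "w = e" | "s = w \<or> s = p" | "w \<noteq> e" "join w p \<inter> M \<noteq> {}"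
    | "w \<noteq> e" "s \<noteq> w" "s \<noteq> p" "join w p \<inter> M = {}"
    by blast
  then show "s \<in> joins L M"
  proof cases
    case 1 then show ?thesis using join_vertex_subset_joins[OF p] s by blast
  next
    case 2 then show ?thesis using p(1) w lines_subset_joins by blast
  next
    case 3
    then obtain v where v: "v \<in> join w p" "v \<in> M" by blast
    then have "v \<noteq> w" using w 3(1) crossing_unique_point by blast
    then have "join w v = join w p" using join_eq_join_left X v(1) by blast
    then show ?thesis using joinsI[OF w v(2)] s by simp
  next
    case 4 then show ?thesis using parallel_join_subset_joins[OF p w] s by blast
  qed
qed

lemma vertex_join_subset_joins:
  assumes "z \<in> joins L M"
  shows "join e z \<subseteq> joins L M"
proof -
  note cr = crossingD[OF cross]
  consider "z \<in> L" | "z \<in> M" | "z \<notin> L" "z \<notin> M" by blast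
  then show ?thesis
  proof cases
    case 1 then show ?thesis using join_subset_line[OF cr(1,4)] lines_subset_joins by blast
  next
    case 2 then show ?thesis using join_subset_line[OF cr(2,5)] lines_subset_joins by blast
  next
    case 3 then show ?thesis using join_vertex_subset_joins assms by blast
  qed
qed

lemma joins_subset_joins:
  assumes N: "N \<in> \<L>" "e \<in> N" "N \<subseteq> joins L M"
  shows "joins L N \<subseteq> joins L M"
proof
  fix q assume "q \<in> joins L N"
  then obtain w n where wn: "w \<in> L" "n \<in> N" "q \<in> join w n" by (rule joinsE)
  consider "n \<in> L" | "n \<in> M" | "n \<notin> L" "n \<notin> M" by blast
  then show "q \<in> joins L M"
  proof cases
    case 1 then show ?thesis
      using join_subset_line[OF crossingD(1)[OF cross] wn(1)] wn(3) lines_subset_joins by blast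
  next
    case 2 then show ?thesis using joinsI wn by blast
  next
    case 3 then show ?thesis
      using join_left_subset_joins[OF _ _ _ wn(1)] N(3) wn join_commute by blast
  qed
qed

end

lemma joins_eq_joins_line:
  assumes cross: "crossing e L M" and N: "N \<in> \<L>" "e \<in> N" "N \<subseteq> joins L M" "N \<noteq> L"
  shows "crossing e L N" "joins L N = joins L M"
proof -
  note cr = crossingD[OF cross]
  show crossN: "crossing e L N" using cr N unfolding crossing_def by blast
  show "joins L N = joins L M"
  proof (rule antisym)
    show "joins L N \<subseteq> joins L M" using joins_subset_joins[OF cross N(1-3)] .
    have "M \<subseteq> joins L N"
    proof (cases "N = M")
      case True then show ?thesis using lines_subset_joins[OF crossN] by simp
    next
      case False
      obtain y where y: "y \<in> N" "y \<noteq> e" using line_other_point[OF N(1)] by blast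
      have yLM: "y \<notin> L" "y \<notin> M" using lines_eq[OF N(1) _ y(1) _ N(2) _ y(2)] cr N(4) False by blast+
      obtain w0 v0 where w0: "w0 \<in> L" and v0: "v0 \<in> M" "v0 \<noteq> e" and "y \<in> join w0 v0" "y \<noteq> w0"
        using joins_off_lines_witness[OF cross _ yLM] N(3) y(1) by blast
      then have "v0 \<in> join w0 y"
        using join_eq_join_left[of w0 v0 y] cr line_subset by (metis right_in_join subsetD)
      then have v0N: "v0 \<in> joins L N" using joinsI[OF w0 y(1)] by blast
      have "v0 \<notin> L" "v0 \<notin> N"
        using crossing_unique_point[OF cross] lines_eq[OF N(1) cr(2) _ v0(1) N(2) cr(5) v0(2)]
          False v0 by blast+
      then have "join e v0 \<subseteq> joins L N" using join_vertex_subset_joins[OF crossN v0N] by blast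
      then show ?thesis using join_eq_line[OF cr(2,5) v0(1)] v0(2) by simp
    qed
    then show "joins L M \<subseteq> joins L N"
      using joins_subset_joins[OF crossN cr(2,5)] by blast
  qed
qed

lemma joins_eq_joins:
  assumes cross: "crossing e L M" and cross': "crossing e N N'"
    and sub: "N \<subseteq> joins L M" "N' \<subseteq> joins L M"
  shows "joins N N' = joins L M"
proof (cases "N = L")
  case True
  then show ?thesis using joins_eq_joins_line(2)[OF cross _ _ sub(2)] crossingD[OF cross'] by blast
next
  case False
  then have "crossing e L N" and "joins L N = joins L M"
    using joins_eq_joins_line[OF cross _ _ sub(1)] crossingD[OF cross'] by blast+
  then have cross'': "crossing e N L" and "joins N L = joins L M"
    using crossing_commute joins_commute by auto
  then show ?thesis
    using joins_eq_joins_line(2)[OF cross'' _ _ _ _] crossingD[OF cross'] sub(2)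
    by (cases "N' = L") auto
qed

lemma joins_flat:
  assumes cross: "crossing e L M"
  shows "flat X \<L> (joins L M)"
  unfolding flat_def
proof (intro conjI ballI impI)
  show "joins L M \<subseteq> X" using joins_crossing_subset_X[OF cross] .
  fix z1 z2 assume z: "z1 \<in> joins L M" "z2 \<in> joins L M" "z1 \<noteq> z2"
  note cr = crossingD[OF cross]
  have X: "z1 \<in> X" "z2 \<in> X" using z joins_crossing_subset_X[OF cross] by blast+
  show "join z1 z2 \<subseteq> joins L M"
  proof (cases "e \<in> join z1 z2")
    case True
    obtain z where "z \<in> join z1 z2" "z \<noteq> e" "z \<in> joins L M"
      using z X left_in_join right_in_join by metis
    then have "join e z = join z1 z2" using join_eq_join[OF X True] by blast
    then show ?thesis using vertex_join_subset_joins[OF cross] \<open>z \<in> joins L M\<close> by blast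
  next
    case False
    have "e \<noteq> z1" using False X by auto
    moreover have "z2 \<notin> join e z1"
    proof
      assume "z2 \<in> join e z1"
      then have "join z1 z2 = join e z1"
        using join_eq_join[OF cr(6) X(1) _ _ z(3)] X(1) cr(6) by simp
      then show False using False cr(6) X(1) by simp
    qed
    ultimately have "crossing e (join e z1) (join e z2)" using crossing_joins cr(6) X by blast
    then have "joins (join e z1) (join e z2) = joins L M"
      using joins_eq_joins[OF cross] vertex_join_subset_joins[OF cross] z by blast
    moreover have "join z1 z2 \<subseteq> joins (join e z1) (join e z2)"
      using joinsI[of z1 _ z2] X cr(6) by (metis right_in_join subsetI)
    ultimately show ?thesis by simp
  qed
qed

lemma joins_move_vertex:
  assumes cross: "crossing e L M" and a: "a \<in> L" "a \<noteq> e" and m: "m \<in> M" "m \<noteq> e"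
  shows "crossing a L (join a m)" "joins L (join a m) = joins L M"
proof -
  note cr = crossingD[OF cross]
  have X: "a \<in> X" "m \<in> X" using a m cr line_subset by blast+
  have "m \<notin> L" using m crossing_unique_point[OF cross] by blast
  then have "a \<noteq> m" using a by blast
  then show cross': "crossing a L (join a m)"
    using join_line[OF X] \<open>m \<notin> L\<close> cr(1) a(1) unfolding crossing_def by blast
  have "join a m \<subseteq> joins L M"
    using flat_join[OF joins_flat[OF cross]] lines_subset_joins[OF cross] a(1) m(1) by blast
  then have "joins L (join a m) \<subseteq> joins L M"
    using joins_subset_flat[OF joins_flat[OF cross]] lines_subset_joins[OF cross] by blast
  moreover have "M \<subseteq> joins L (join a m)"
    using flat_join[OF joins_flat[OF cross'], of e m] lines_subset_joins[OF cross'] cr(4)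
      right_in_join[OF X] join_eq_line[OF cr(2,5) m(1) m(2)[symmetric]] by blast
  then have "joins L M \<subseteq> joins L (join a m)"
    using joins_subset_flat[OF joins_flat[OF cross']] lines_subset_joins[OF cross'] by blast
  ultimately show "joins L (join a m) = joins L M" by blast
qed

definition span_plane :: "'a set \<Rightarrow> bool" where
  "span_plane P \<longleftrightarrow> (\<exists>e L M. crossing e L M \<and> P = joins L M)"

lemma span_planeI: "crossing e L M \<Longrightarrow> span_plane (joins L M)"
  unfolding span_plane_def by blast

lemma span_plane_flat: "span_plane P \<Longrightarrow> flat X \<L> P"
  unfolding span_plane_def using joins_flat by blast

lemma span_plane_at:
  assumes P: "span_plane P" and a: "a \<in> P"
  obtains L M where "crossing a L M" "P = joins L M"
proof -
  obtain e L M where cross: "crossing e L M" and PLM: "P = joins L M"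
    using P unfolding span_plane_def by blast
  note cr = crossingD[OF cross]
  consider "a = e" | "a \<in> L" "a \<noteq> e" | "a \<in> M" "a \<noteq> e" | "a \<notin> L" "a \<notin> M" by blast
  then show thesis
  proof cases
    case 1 then show ?thesis using that cross PLM by blast
  next
    case 2
    obtain m where "m \<in> M" "m \<noteq> e" using line_other_point[OF cr(2)] by blast
    then show ?thesis using joins_move_vertex[OF cross 2] that PLM by metis
  next
    case 3
    obtain l where "l \<in> L" "l \<noteq> e" using line_other_point[OF cr(1)] by blast
    then show ?thesis
      using joins_move_vertex[OF crossing_commute[OF cross] 3] that PLM joins_commute by metis
  next
    case 4
    obtain w v where w: "w \<in> L" "w \<noteq> e" and v: "v \<in> M" "v \<noteq> e" and "a \<in> join w v" "a \<noteq> w"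
      using joins_off_lines_witness[OF cross _ 4] a PLM by blast
    then have cross': "crossing w (join w v) L" and "joins (join w v) L = P"
      using joins_move_vertex[OF cross w v] crossing_commute joins_commute PLM by auto
    moreover obtain l where "l \<in> L" "l \<noteq> w" using line_other_point[OF cr(1)] by blast
    ultimately show ?thesis
      using joins_move_vertex[OF cross' \<open>a \<in> join w v\<close> \<open>a \<noteq> w\<close>] that by metis
  qed
qed

lemma span_plane_eq_joins:
  assumes P: "span_plane P" and cross: "crossing a A B" and sub: "A \<subseteq> P" "B \<subseteq> P"
  shows "P = joins A B"
proof -
  obtain L M where "crossing a L M" "P = joins L M"
    using span_plane_at[OF P] crossingD(4)[OF cross] sub by blast
  then show ?thesis using joins_eq_joins[OF _ cross] sub by metis
qed

lemma line_meets_crossing_lines: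
  assumes cross: "crossing e L M" and K: "K \<in> \<L>" "K \<subseteq> joins L M"
  shows "K \<inter> L \<noteq> {} \<or> K \<inter> M \<noteq> {}"
proof (rule ccontr)
  assume "\<not> ?thesis"
  then have KL: "K \<inter> L = {}" and KM: "K \<inter> M = {}" by auto
  note cr = crossingD[OF cross]
  obtain k1 k2 where k: "k1 \<in> K" "k2 \<in> K" "k1 \<noteq> k2" using line_two_points[OF K(1)] .
  have X: "k1 \<in> X" "k2 \<in> X" using k K(1) line_subset by blast+
  have K12: "join k1 k2 = K" using join_eq_line[OF K(1) k] .
  have k1LM: "k1 \<notin> L" "k1 \<notin> M" and k2LM: "k2 \<notin> L" "k2 \<notin> M" using k KL KM by blast+
  define N where "N = join e k1"
  have N: "N \<in> \<L>" "e \<in> N" "k1 \<in> N" "N \<subseteq> joins L M"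
    using join_line[OF cr(6) X(1)] vertex_join_subset_joins[OF cross] k(1) K(2) cr(4) k1LM N_def
    by auto
  have "N \<noteq> L" "N \<noteq> M" using N(3) k1LM by auto
  then have crossL: "crossing e N L" and crossM: "crossing e N M"
    and PL: "joins N L = joins L M" and PM: "joins N M = joins L M"
    using joins_eq_joins_line[OF cross N(1,2,4)]
      joins_eq_joins_line[OF crossing_commute[OF cross] N(1,2)] N(4)
      crossing_commute joins_commute by metis+
  have k2N: "k2 \<notin> N" using lines_eq[OF K(1) N(1) k(1) N(3) k(2)] k(3) N(2) KL cr(4) by blast
  have k2P: "k2 \<in> joins L M" using k(2) K(2) by blast
  have meetL: "join y k2 \<inter> L \<noteq> {}" if "y \<in> N" "y \<noteq> k1" for y
    using joins_parallel_point_unique[OF crossL _ k2N k2LM(1) that(1) _ N(3)] PL k2P K12 KL that(2)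
    by blast
  have meetM: "join y k2 \<inter> M \<noteq> {}" if "y \<in> N" "y \<noteq> k1" for y
    using joins_parallel_point_unique[OF crossM _ k2N k2LM(2) that(1) _ N(3)] PM k2P K12 KM that(2)
    by blast
  obtain y where y: "y \<in> N" "y \<noteq> e" "y \<noteq> k1" using line_fourth_point[OF N(1)] by blast
  have yX: "y \<in> X" using y(1) N(1) line_subset by blast
  obtain l m where l: "l \<in> join y k2" "l \<in> L" and m: "m \<in> join y k2" "m \<in> M"
    using meetL[OF y(1,3)] meetM[OF y(1,3)] by blast
  have yk2: "join y k2 \<in> \<L>" using join_in_lines[OF yX X(2)] y(1) k2N by blast
  have "e \<notin> join y k2"
    using lines_eq[OF yk2 N(1) _ N(2) _ y(1) y(2)[symmetric]] yX X(2) k2N by auto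
  then have le: "l \<noteq> e" and me: "m \<noteq> e" and "l \<noteq> m"
    using l m crossing_unique_point[OF cross] by blast+
  have "y \<notin> K" using lines_eq[OF K(1) N(1) _ y(1) k(1) N(3) y(3)] N(2) cr(4) KL by blast
  then have crossK: "crossing k2 (join k2 y) K"
    using join_line[OF X(2) yX] k(2) K(1) unfolding crossing_def by blast
  have "e \<in> join y k1" using join_eq_line[OF N(1) y(1) N(3) y(3)] N(2) by simp
  then have "e \<in> joins (join k2 y) K" using joinsI[OF _ k(1)] right_in_join[OF X(2) yX] by blast
  moreover have "e \<notin> K" "e \<notin> join k2 y" using cr(4) KL \<open>e \<notin> join y k2\<close> join_commute by auto
  moreover have "join l e \<inter> K = {}" "join m e \<inter> K = {}"
    using join_eq_line[OF cr(1) l(2) cr(4) le] join_eq_line[OF cr(2) m(2) cr(5) me] KL KM by auto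
  \<comment> \<open>both \<open>l\<close> and \<open>m\<close> would be the unique point of \<open>join k2 y\<close> whose join with \<open>e\<close> misses \<open>K\<close>\<close>
  ultimately show False
    using joins_parallel_point_unique[OF crossK] l(1) m(1) join_commute[of y k2] \<open>l \<noteq> m\<close> by metis
qed

lemma points_in_joins:
  assumes "a \<in> X" "b \<in> X" "c \<in> X"
  shows "a \<in> joins (join a b) (join a c)" "b \<in> joins (join a b) (join a c)"
    "c \<in> joins (join a b) (join a c)"
  using joinsI[of a _ a] joinsI[of b _ a] joinsI[of a _ c] assms by simp_all

lemma span_plane_eq:
  assumes P: "span_plane P" and Q: "span_plane Q"
    and abc: "{a, b, c} \<subseteq> P" "{a, b, c} \<subseteq> Q" "a \<noteq> b" "c \<notin> join a b"
  shows "P = Q"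
proof -
  have X: "a \<in> X" "b \<in> X" "c \<in> X" using abc(1) span_plane_flat[OF P] flat_subset_X by blast+
  have cross: "crossing a (join a b) (join a c)" using crossing_joins[OF X abc(3,4)] .
  have "R = joins (join a b) (join a c)" if R: "span_plane R" "{a, b, c} \<subseteq> R" for R
    using span_plane_eq_joins[OF R(1) cross] flat_join[OF span_plane_flat[OF R(1)]] R(2) by simp
  then show ?thesis using P Q abc(1,2) by metis
qed

lemma span_plane_inter:
  assumes P: "span_plane P" and Q: "span_plane Q" and "P \<noteq> Q"
    and ab: "a \<in> P" "a \<in> Q" "b \<in> P" "b \<in> Q" "a \<noteq> b"
  shows "P \<inter> Q = join a b"
proof
  show "join a b \<subseteq> P \<inter> Q"
    using flat_join[OF span_plane_flat[OF P]] flat_join[OF span_plane_flat[OF Q]] ab by blast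
  show "P \<inter> Q \<subseteq> join a b" using span_plane_eq[OF P Q] ab \<open>P \<noteq> Q\<close> by blast
qed

lemma parallel_exists:
  assumes F: "flat X \<L> F" and K: "K \<in> \<L>" "K \<subseteq> F" and z: "z \<in> F" "z \<notin> K"
  obtains \<Lambda> where "\<Lambda> \<in> \<L>" "z \<in> \<Lambda>" "\<Lambda> \<subseteq> F" "\<Lambda> \<inter> K = {}"
proof -
  obtain k1 k2 where k: "k1 \<in> K" "k2 \<in> K" "k1 \<noteq> k2" using line_two_points[OF K(1)] .
  have X: "k1 \<in> X" "k2 \<in> X" "z \<in> X" using k K(1) line_subset F flat_subset_X z(1) by blast+
  have "k2 \<noteq> z" using k z by blast
  then obtain y where y: "y \<in> join k2 z" "y \<noteq> k2" "y \<noteq> z"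
    using line_fourth_point[OF join_in_lines[OF X(2,3)]] by blast
  have yX: "y \<in> X" using y(1) join_subset_X[OF X(2,3)] by blast
  have zy: "z \<in> join k2 y" using join_eq_join_left[OF X(2,3) y(1,2)] X(2,3) by simp
  have K12: "join k1 k2 = K" using join_eq_line[OF K(1) k] .
  obtain u where u: "u \<in> join k1 y" "join u z \<inter> K = {}"
    using affine_unique_parallel[OF X(1,2) yX zy] K12 z(2) by metis
  have "y \<in> F" using flat_join[OF F _ z(1)] K(2) k(2) y(1) by blast
  then have "u \<in> F" using flat_join[OF F _ \<open>y \<in> F\<close>] K(2) k(1) u(1) by blast
  have uX: "u \<in> X" using \<open>u \<in> F\<close> F flat_subset_X by blast
  have "u \<noteq> z"
  proof
    assume "u = z"
    then have "join z y = join k1 y" using join_eq_join[OF X(1) yX u(1)] yX X(1) y(3) by simp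
    moreover have "join z y = join k2 z" using join_eq_join[OF X(2,3) _ y(1) ] X(2,3) y(3) by simp
    ultimately have "k1 \<in> join k2 z" using X(1) yX by (metis left_in_join)
    then have "join k2 z = K"
      using lines_eq[OF join_in_lines[OF X(2,3) \<open>k2 \<noteq> z\<close>] K(1) _ k(1) _ k(2) k(3)] X(2,3) by simp
    then show False using z(2) X(2,3) by auto
  qed
  then show thesis
    using that[of "join u z"] join_line[OF uX X(3)] flat_join[OF F \<open>u \<in> F\<close> z(1)] u(2) by blast
qed

lemma parallel_unique:
  assumes P: "span_plane P" and K: "K \<in> \<L>" "K \<subseteq> P"
    and \<Lambda>: "\<Lambda> \<in> \<L>" "z \<in> \<Lambda>" "\<Lambda> \<subseteq> P" "\<Lambda> \<inter> K = {}"
    and \<Lambda>': "\<Lambda>' \<in> \<L>" "z \<in> \<Lambda>'" "\<Lambda>' \<subseteq> P" "\<Lambda>' \<inter> K = {}"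
  shows "\<Lambda> = \<Lambda>'"
proof (rule ccontr)
  assume "\<Lambda> \<noteq> \<Lambda>'"
  then have cross: "crossing z \<Lambda> \<Lambda>'" using \<Lambda> \<Lambda>' unfolding crossing_def by blast
  then have "P = joins \<Lambda> \<Lambda>'" using span_plane_eq_joins[OF P] \<Lambda>(3) \<Lambda>'(3) by blast
  then show False using line_meets_crossing_lines[OF cross K(1)] K(2) \<Lambda>(4) \<Lambda>'(4) by blast
qed

lemma nonparallel_lines_meet:
  assumes P: "span_plane P" and K: "K \<in> \<L>" "K \<subseteq> P" and N: "N \<in> \<L>" "z \<in> N" "N \<subseteq> P"
    and \<Lambda>: "\<Lambda> \<in> \<L>" "z \<in> \<Lambda>" "\<Lambda> \<subseteq> P" "\<Lambda> \<inter> K = {}" and "N \<noteq> \<Lambda>"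
  shows "N \<inter> K \<noteq> {}"
  using parallel_unique[OF P K N _ \<Lambda>] assms by blast

lemma plane_noncollinear_basis:
  assumes "plane X \<L> P"
  obtains b1 b2 b3 where "{b1, b2, b3} \<subseteq> X" "b1 \<noteq> b2" "b3 \<notin> join b1 b2"
    "P \<subseteq> hull X \<L> {b1, b2, b3}"
proof -
  have rank: "has_rank X \<L> P 3" using assms unfolding plane_def by blast
  then obtain B where B: "B \<subseteq> X" "card B = 3" "P \<subseteq> hull X \<L> B"
    unfolding has_rank_def by blast
  have min: "3 \<le> card B'" if "B' \<subseteq> X" "finite B'" "P \<subseteq> hull X \<L> B'" for B'
    using rank that unfolding has_rank_def by blast
  obtain b1 b2 b3 where b: "B = {b1, b2, b3}" "b1 \<noteq> b2"
    using B(2) unfolding card_3_iff by blast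
  have bX: "b1 \<in> X" "b2 \<in> X" "b3 \<in> X" using B(1) b(1) by auto
  have "b3 \<notin> join b1 b2"
  proof
    assume "b3 \<in> join b1 b2"
    then have "hull X \<L> B \<subseteq> join b1 b2"
      using hull_minimal[OF flat_line[OF bX(1,2)]] b(1) bX by simp
    moreover have b12: "{b1, b2} \<subseteq> X" using bX by blast
    then have "join b1 b2 \<subseteq> hull X \<L> {b1, b2}"
      using flat_join[OF hull_flat[OF b12]] hull_subset[of "{b1, b2}"] by blast
    ultimately have "P \<subseteq> hull X \<L> {b1, b2}" using B(3) by blast
    then have "3 \<le> card {b1, b2}" using min[OF b12] by blast
    then show False using b(2) by simp
  qed
  then show thesis using that B b by blast
qed

lemma plane_span_plane:
  assumes P: "plane X \<L> P" and L: "L \<in> \<L>" "L \<subseteq> P" and x: "x \<in> P" "x \<notin> L"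
  shows "span_plane P"
proof -
  have F: "flat X \<L> P" using P unfolding plane_def by blast
  obtain b1 b2 b3 where b: "{b1, b2, b3} \<subseteq> X" "b1 \<noteq> b2" "b3 \<notin> join b1 b2"
    "P \<subseteq> hull X \<L> {b1, b2, b3}"
    using plane_noncollinear_basis[OF P] .
  have bX: "b1 \<in> X" "b2 \<in> X" "b3 \<in> X" using b(1) by auto
  define H where "H = joins (join b1 b2) (join b1 b3)"
  have H: "span_plane H"
    unfolding H_def by (rule span_planeI[OF crossing_joins[OF bX b(2,3)]])
  have "{b1, b2, b3} \<subseteq> H" unfolding H_def using points_in_joins[OF bX] by blast
  then have PH: "P \<subseteq> H" using hull_minimal[OF span_plane_flat[OF H]] b(4) by blast
  obtain l1 l2 where l: "l1 \<in> L" "l2 \<in> L" "l1 \<noteq> l2" using line_two_points[OF L(1)] .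
  have X: "l1 \<in> X" "l2 \<in> X" "x \<in> X" using l L x F flat_subset_X by blast+
  have xl: "x \<notin> join l1 l2" using join_eq_line[OF L(1) l] x(2) by simp
  define Q where "Q = joins (join l1 l2) (join l1 x)"
  have Q: "span_plane Q"
    unfolding Q_def by (rule span_planeI[OF crossing_joins[OF X l(3) xl]])
  have lx: "{l1, l2, x} \<subseteq> P" using L(2) l x(1) by blast
  then have "Q \<subseteq> P" unfolding Q_def using joins_subset_flat[OF F] flat_join[OF F] by simp
  moreover have "{l1, l2, x} \<subseteq> Q" unfolding Q_def using points_in_joins[OF X] by blast
  then have "Q = H" using span_plane_eq[OF Q H _ _ l(3) xl] lx PH by blast
  ultimately have "P = Q" using PH by blast
  then show ?thesis using Q by simp
qed

lemma playfair: "playfair X \<L>"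
  unfolding playfair_def
proof (intro allI impI)
  fix P L x assume "plane X \<L> P \<and> L \<in> \<L> \<and> L \<subseteq> P \<and> x \<in> P - L"
  then have P: "plane X \<L> P" and L: "L \<in> \<L>" "L \<subseteq> P" and x: "x \<in> P" "x \<notin> L" by auto
  have "span_plane P" using plane_span_plane[OF P L x] .
  then obtain \<Lambda> where \<Lambda>: "\<Lambda> \<in> \<L>" "x \<in> \<Lambda>" "\<Lambda> \<subseteq> P" "\<Lambda> \<inter> L = {}"
    using parallel_exists[OF span_plane_flat L x] by blast
  show "\<exists>!\<Lambda>. \<Lambda> \<in> \<L> \<and> x \<in> \<Lambda> \<and> \<Lambda> \<subseteq> P - L"
  proof (rule ex1I[of _ \<Lambda>])
    show "\<Lambda> \<in> \<L> \<and> x \<in> \<Lambda> \<and> \<Lambda> \<subseteq> P - L" using \<Lambda> by blast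
    fix \<Lambda>' assume "\<Lambda>' \<in> \<L> \<and> x \<in> \<Lambda>' \<and> \<Lambda>' \<subseteq> P - L"
    then show "\<Lambda>' = \<Lambda>" using parallel_unique[OF \<open>span_plane P\<close> L _ _ _ _ \<Lambda>] by blast
  qed
qed

subsection \<open>Regularity\<close>

context
  fixes \<rho> m n D
  assumes \<rho>: "span_plane \<rho>" and m: "m \<in> \<rho>" and n: "n \<in> X" "n \<notin> \<rho>" and D: "D = join m n"
begin

lemmas rho_flat = span_plane_flat[OF \<rho>]
lemmas rho_subset_X = flat_subset_X[OF rho_flat]

lemma D_line: "D \<in> \<L>" "m \<in> D" "n \<in> D"
  using join_line[of m n] m n rho_subset_X D by auto

lemma D_inter_rho: "d \<in> D \<Longrightarrow> d \<in> \<rho> \<Longrightarrow> d = m"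
  using join_eq_line[OF D_line(1,2)] flat_join[OF rho_flat m] D_line(3) n(2) by blast

lemma rho_subset_joins: "\<rho> \<subseteq> joins \<rho> D"
  using subset_joins[OF rho_subset_X D_line(2)] m rho_subset_X by blast

lemma D_subset_joins: "D \<subseteq> joins \<rho> D"
  using subset_joins[OF line_subset[OF D_line(1)] m] joins_commute m rho_subset_X by blast

lemmas joins_rho_D_subset_X = joins_subset_X[OF rho_subset_X line_subset[OF D_line(1)]]

lemma crossing_rho_line_D:
  assumes c: "c \<in> \<rho>" "c \<noteq> m"
  shows "crossing m (join m c) D" "joins (join m c) D \<subseteq> joins \<rho> D"
proof -
  have cX: "c \<in> X" using c rho_subset_X by blast
  have "c \<notin> D" using D_inter_rho c by blast
  then show "crossing m (join m c) D"
    using join_line[of m c] m c cX rho_subset_X D_line unfolding crossing_def by auto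
  show "joins (join m c) D \<subseteq> joins \<rho> D" using joins_mono flat_join[OF rho_flat m c(1)] by blast
qed

lemma joins_off_D:
  assumes "s \<in> joins \<rho> D" "s \<notin> D"
  obtains c where "c \<in> \<rho>" "c \<noteq> m" "s \<in> joins (join m c) D"
proof -
  obtain c y where c: "c \<in> \<rho>" and y: "y \<in> D" and s: "s \<in> join c y" using assms(1) by (rule joinsE)
  have "c \<noteq> m" using join_subset_line[OF D_line(1,2) y] s assms(2) by blast
  moreover have "c \<in> join m c" using c rho_subset_X m by (simp add: subset_iff)
  ultimately show thesis using that c joinsI[OF _ y s] by blast
qed

lemma join_D_subset_joins:
  assumes y: "y \<in> D" and s: "s \<in> joins \<rho> D"
  shows "join y s \<subseteq> joins \<rho> D"
proof (cases "s \<in> D")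
  case True then show ?thesis using join_subset_line[OF D_line(1) y] D_subset_joins by blast
next
  case False
  then obtain c where c: "c \<in> \<rho>" "c \<noteq> m" "s \<in> joins (join m c) D" using joins_off_D[OF s] by blast
  note cross = crossing_rho_line_D[OF c(1,2)]
  have "y \<in> joins (join m c) D" using lines_subset_joins[OF cross(1)] y by blast
  then show ?thesis using flat_join[OF joins_flat[OF cross(1)] _ c(3)] cross(2) by blast
qed

lemma joins_off_rho_D:
  assumes s: "s \<in> joins \<rho> D" "s \<notin> D" "s \<notin> \<rho>"
  obtains c y0 where "c \<in> \<rho>" "c \<noteq> m" "s \<in> joins (join m c) D"
    "\<And>y. y \<in> D \<Longrightarrow> y \<noteq> m \<Longrightarrow> y \<noteq> y0 \<Longrightarrow> \<exists>c'\<in>join m c. c' \<noteq> m \<and> s \<in> join c' y"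
proof -
  obtain c where c: "c \<in> \<rho>" "c \<noteq> m" and sP: "s \<in> joins (join m c) D"
    using joins_off_D[OF s(1,2)] by blast
  define l where "l = join m c"
  have sPl: "s \<in> joins l D" using sP l_def by simp
  note cross = crossing_rho_line_D(1)[OF c, folded l_def]
  note cr = crossingD[OF cross]
  have P: "span_plane (joins l D)" using span_planeI[OF cross] .
  have "l \<subseteq> \<rho>" using flat_join[OF rho_flat m c(1)] l_def by simp
  then have sl: "s \<notin> l" using s(3) by blast
  have sX: "s \<in> X" using sPl joins_crossing_subset_X[OF cross] by blast
  obtain \<Lambda> where \<Lambda>: "\<Lambda> \<in> \<L>" "s \<in> \<Lambda>" "\<Lambda> \<subseteq> joins l D" "\<Lambda> \<inter> l = {}"
    using parallel_exists[OF joins_flat[OF cross] cr(1) _ _ sl] lines_subset_joins[OF cross] sPl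
    by blast
  then obtain y0 where y0: "y0 \<in> \<Lambda>" "y0 \<in> D" using line_meets_crossing_lines[OF cross] by blast
  have "\<exists>c'\<in>l. c' \<noteq> m \<and> s \<in> join c' y" if y: "y \<in> D" "y \<noteq> m" "y \<noteq> y0" for y
  proof -
    have yX: "y \<in> X" using y(1) line_subset[OF D_line(1)] by blast
    have ys: "y \<noteq> s" using y(1) s(2) by blast
    have N: "join y s \<in> \<L>" "y \<in> join y s" "s \<in> join y s" using join_line[OF yX sX ys] by auto
    have "join y s \<subseteq> joins l D"
      using flat_join[OF joins_flat[OF cross] _ sPl] lines_subset_joins(2)[OF cross] y(1) by blast
    moreover have "join y s \<noteq> \<Lambda>"
      using lines_eq[OF \<Lambda>(1) D_line(1) _ y(1) y0 y(3)] N(2) s(2) \<Lambda>(2) by blast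
    ultimately obtain c' where c': "c' \<in> join y s" "c' \<in> l"
      using nonparallel_lines_meet[OF P cr(1) lines_subset_joins(1)[OF cross] N(1,3) _ \<Lambda>] by blast
    have "c' \<noteq> m"
      using lines_eq[OF N(1) D_line(1) _ D_line(2) N(2) y(1) y(2)[symmetric]] c'(1) N(3) s(2)
      by blast
    moreover have "c' \<noteq> y" using c'(2) \<open>l \<subseteq> \<rho>\<close> D_inter_rho y(1,2) by blast
    then have "s \<in> join c' y"
      using join_eq_join_left[OF yX sX c'(1)] join_commute[of y c'] N(3) by simp
    ultimately show ?thesis using c'(2) by blast
  qed
  then show thesis using that c sP l_def by blast
qed

lemma line_in_plane_subset_joins:
  assumes c: "c1 \<in> \<rho>" "c2 \<in> \<rho>" "c1 \<noteq> c2" and y0: "y0 \<in> D" "y0 \<noteq> m"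
    and N: "N \<in> \<L>" "N \<inter> \<rho> = {}" "N \<inter> D = {}" "N \<subseteq> joins (join c1 c2) (join c1 y0)"
  shows "N \<subseteq> joins \<rho> D"
proof
  fix t assume t: "t \<in> N"
  have X: "c1 \<in> X" "c2 \<in> X" "y0 \<in> X" "t \<in> X"
    using c rho_subset_X y0(1) line_subset[OF D_line(1)] t N(1) line_subset by blast+
  have k\<rho>: "join c1 c2 \<subseteq> \<rho>" using flat_join[OF rho_flat c(1,2)] .
  have "y0 \<notin> join c1 c2" using k\<rho> D_inter_rho y0 by blast
  then have cross: "crossing c1 (join c1 c2) (join c1 y0)" using crossing_joins X c(3) by blast
  note \<tau> = span_planeI[OF cross] joins_flat[OF cross]
  have "y0 \<noteq> t" using N(3) t y0(1) by blast
  then have Y: "join y0 t \<in> \<L>" "t \<in> join y0 t" "y0 \<in> join y0 t" using join_line[OF X(3,4)] by auto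
  have "join y0 t \<subseteq> joins (join c1 c2) (join c1 y0)"
    using flat_join[OF \<tau>(2) _] points_in_joins[OF X(1-3)] N(4) t by blast
  moreover have "join y0 t \<noteq> N" using Y(3) N(3) y0(1) by blast
  moreover have "N \<inter> join c1 c2 = {}" using N(2) k\<rho> by blast
  ultimately obtain c where c': "c \<in> join y0 t" "c \<in> join c1 c2"
    using nonparallel_lines_meet[OF \<tau>(1) join_in_lines[OF X(1,2) c(3)] _ Y(1,2) _ N(1) t N(4)]
      lines_subset_joins(1)[OF cross] by blast
  have "c \<noteq> y0" using c'(2) k\<rho> D_inter_rho y0 by blast
  then have "t \<in> join c y0"
    using join_eq_join_left[OF X(3,4) c'(1)] join_commute[of y0 c] Y(2) by simp
  then show "t \<in> joins \<rho> D" using joinsI c'(2) k\<rho> y0(1) by blast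
qed

lemma line_off_rho_subset_joins:
  assumes N: "N \<in> \<L>" "N \<inter> \<rho> = {}" and q: "q \<in> N" "q \<in> joins \<rho> D"
    and r: "r \<in> N" "r \<in> joins \<rho> D" and "q \<noteq> r"
  shows "N \<subseteq> joins \<rho> D"
proof (cases "N \<inter> D = {}")
  case False
  then obtain y where y: "y \<in> N" "y \<in> D" by blast
  obtain q' where q': "q' \<in> N" "q' \<in> joins \<rho> D" "q' \<noteq> y" using q r \<open>q \<noteq> r\<close> by metis
  then show ?thesis
    using join_D_subset_joins[OF y(2) q'(2)] join_eq_line[OF N(1) y(1) q'(1)] by simp
next
  case True
  have qr: "q \<notin> D" "q \<notin> \<rho>" "r \<notin> D" "r \<notin> \<rho>" using True N(2) q(1) r(1) by blast+
  obtain cq yq where cq: "cq \<in> \<rho>" "cq \<noteq> m" "q \<in> joins (join m cq) D"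
    and yq: "\<And>y. y \<in> D \<Longrightarrow> y \<noteq> m \<Longrightarrow> y \<noteq> yq \<Longrightarrow> \<exists>c'\<in>join m cq. c' \<noteq> m \<and> q \<in> join c' y"
    using joins_off_rho_D[OF q(2) qr(1,2)] by blast
  obtain cr yr where cr: "cr \<in> \<rho>" "cr \<noteq> m" "r \<in> joins (join m cr) D"
    and yr: "\<And>y. y \<in> D \<Longrightarrow> y \<noteq> m \<Longrightarrow> y \<noteq> yr \<Longrightarrow> \<exists>c'\<in>join m cr. c' \<noteq> m \<and> r \<in> join c' y"
    using joins_off_rho_D[OF r(2) qr(3,4)] by blast
  have Nqr: "join q r = N" using join_eq_line[OF N(1) q(1) r(1) \<open>q \<noteq> r\<close>] .
  show ?thesis
  proof (cases "join m cq = join m cr")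
    case True
    note cross = crossing_rho_line_D[OF cq(1,2)]
    have "join q r \<subseteq> joins (join m cq) D"
      using flat_join[OF joins_flat[OF cross(1)] cq(3)] cr(3) True by simp
    then show ?thesis using Nqr cross(2) by simp
  next
    case False
    obtain y0 where y0: "y0 \<in> D" "y0 \<noteq> m" "y0 \<noteq> yq" "y0 \<noteq> yr"
      using line_fourth_point[OF D_line(1)] by blast
    obtain c1 where c1: "c1 \<in> join m cq" "c1 \<noteq> m" "q \<in> join c1 y0" using yq y0 by blast
    obtain c2 where c2: "c2 \<in> join m cr" "c2 \<noteq> m" "r \<in> join c2 y0" using yr y0 by blast
    have c\<rho>: "c1 \<in> \<rho>" "c2 \<in> \<rho>" using flat_join[OF rho_flat m] cq(1) cr(1) c1(1) c2(1) by blast+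
    have X: "c1 \<in> X" "c2 \<in> X" "y0 \<in> X"
      using c\<rho> rho_subset_X y0(1) line_subset[OF D_line(1)] by blast+
    have "c1 \<noteq> c2"
    proof
      assume "c1 = c2"
      have "join m cq \<in> \<L>" "join m cr \<in> \<L>" using join_in_lines m cq cr rho_subset_X by blast+
      then show False
        using lines_eq[of "join m cq" "join m cr" m c1] c1(1,2) c2(1) \<open>c1 = c2\<close> False
          m cq(1) cr(1) rho_subset_X by (metis left_in_join subsetD)
    qed
    then have cross: "crossing c1 (join c1 c2) (join c1 y0)"
      using crossing_joins X flat_join[OF rho_flat c\<rho>] D_inter_rho y0(1,2) by blast
    have "q \<in> joins (join c1 c2) (join c1 y0)" "r \<in> joins (join c1 c2) (join c1 y0)"
      using flat_join[OF joins_flat[OF cross]] points_in_joins[OF X] c1(3) c2(3) by blast+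
    then have "N \<subseteq> joins (join c1 c2) (join c1 y0)"
      using flat_join[OF joins_flat[OF cross]] Nqr by blast
    then show ?thesis using line_in_plane_subset_joins[OF c\<rho> \<open>c1 \<noteq> c2\<close> y0(1,2) N True] by blast
  qed
qed

lemma span_plane_subset_joins:
  assumes \<tau>: "span_plane \<tau>" and p: "p \<in> \<rho>" "\<tau> \<inter> \<rho> \<subseteq> {p}"
    and cross: "crossing y A1 A2" and A: "A1 \<subseteq> \<tau>" "A2 \<subseteq> \<tau>" "A1 \<subseteq> joins \<rho> D" "A2 \<subseteq> joins \<rho> D"
  shows "\<tau> \<subseteq> joins \<rho> D"
proof
  fix s assume s\<tau>: "s \<in> \<tau>"
  note cr = crossingD[OF cross]
  show "s \<in> joins \<rho> D"
  proof (cases "s \<in> A1 \<or> s \<in> A2 \<or> s \<in> \<rho>")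
    case True then show ?thesis using A rho_subset_joins by blast
  next
    case False
    then have s: "s \<notin> A1" "s \<notin> A2" "s \<notin> \<rho>" by auto
    have X: "s \<in> X" "p \<in> X" using s\<tau> span_plane_flat[OF \<tau>] flat_subset_X p rho_subset_X by blast+
    have "s \<noteq> p" using s(3) p(1) by blast
    obtain \<Lambda> where \<Lambda>: "\<Lambda> \<in> \<L>" "s \<in> \<Lambda>" "\<Lambda> \<subseteq> \<tau>" "\<Lambda> \<inter> A2 = {}"
      using parallel_exists[OF span_plane_flat[OF \<tau>] cr(2) A(2) s\<tau> s(2)] by blast
    have sp: "join s p \<in> \<L>" "s \<in> join s p" using join_line[OF X \<open>s \<noteq> p\<close>] by auto
    have "A1 \<noteq> \<Lambda>" "A1 \<noteq> join s p" using \<Lambda>(2) sp(2) s(1) by auto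
    then obtain a where a: "a \<in> A1" "a \<noteq> y" "a \<notin> \<Lambda>" "a \<notin> join s p"
      using line_fourth_point[OF cr(1), of y] lines_eq[OF cr(1) \<Lambda>(1)] lines_eq[OF cr(1) sp(1)]
      by metis
    have aX: "a \<in> X" using a(1) cr(1) line_subset by blast
    have "s \<noteq> a" using a(1) s(1) by blast
    then have \<mu>: "join s a \<in> \<L>" "s \<in> join s a" "a \<in> join s a" using join_line[OF X(1) aX] by auto
    have \<mu>\<tau>: "join s a \<subseteq> \<tau>" using flat_join[OF span_plane_flat[OF \<tau>] s\<tau>] A(1) a(1) by blast
    have "join s a \<noteq> \<Lambda>" using \<mu>(3) a(3) by blast
    then obtain a2 where a2: "a2 \<in> join s a" "a2 \<in> A2"
      using nonparallel_lines_meet[OF \<tau> cr(2) A(2) \<mu>(1,2) \<mu>\<tau> \<Lambda>] by blast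
    have "a \<noteq> a2" using a(1,2) a2(2) crossing_unique_point[OF cross] by blast
    have "join s a \<inter> \<rho> = {}"
    proof (rule ccontr)
      assume "join s a \<inter> \<rho> \<noteq> {}"
      then have "p \<in> join s a" using \<mu>\<tau> p(2) by blast
      then have "join s p = join s a" using join_eq_join_left[OF X(1) aX] \<open>s \<noteq> p\<close> by metis
      then show False using a(4) \<mu>(3) by simp
    qed
    then show ?thesis
      using line_off_rho_subset_joins[OF \<mu>(1) _ \<mu>(3) _ a2(1) _ \<open>a \<noteq> a2\<close>] A(3,4) a(1) a2(2) \<mu>(2)
      by blast
  qed
qed

lemma join_D_misses_rho:
  assumes y: "y \<in> D" "y \<noteq> m" and x: "x \<in> X" "x \<notin> joins \<rho> D"
  shows "join y x \<inter> \<rho> = {}"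
proof (rule ccontr)
  assume "join y x \<inter> \<rho> \<noteq> {}"
  then obtain c where c: "c \<in> join y x" "c \<in> \<rho>" by blast
  have yX: "y \<in> X" using y(1) line_subset[OF D_line(1)] by blast
  have "c \<noteq> y" using D_inter_rho y c(2) by blast
  then have "x \<in> join c y" using join_eq_join_left[OF yX x(1) c(1)] join_commute[of y c] yX x(1)
    by simp
  then show False using joinsI[OF c(2) y(1)] x(2) by blast
qed

text \<open>
  A hypothetical point \<open>t\<close> outside \<open>joins \<rho> D\<close> on the line through \<open>w \<in> \<rho>\<close> and
  \<open>q0 \<in> joins \<rho> D\<close>; this configuration is refuted in \<open>point_off_joins_contradiction\<close>.
\<close>
context
  fixes w q0 t
  assumes q0: "q0 \<in> joins \<rho> D" "q0 \<notin> \<rho>" and w: "w \<in> \<rho>"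
    and t: "t \<in> join w q0" "t \<notin> joins \<rho> D" and wq0: "join w q0 \<inter> D = {}"
begin

lemma w_q0_t_in_X: "w \<in> X" "q0 \<in> X" "t \<in> X"
  using w q0(1) t(1) rho_subset_X joins_rho_D_subset_X join_subset_X by blast+

lemma t_notin_rho_D: "t \<notin> \<rho>" "t \<notin> D"
  using t(2) rho_subset_joins D_subset_joins by blast+

lemma crossing_D_t: "crossing m D (join m t)" "D \<subseteq> joins D (join m t)" "t \<in> joins D (join m t)"
proof -
  have "t \<notin> join m n" using t_notin_rho_D(2) D by simp
  then show cross: "crossing m D (join m t)"
    using crossing_joins[OF _ n(1) w_q0_t_in_X(3)] m rho_subset_X D_line(2,3) D n(2) by blast
  show "D \<subseteq> joins D (join m t)" "t \<in> joins D (join m t)"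
    using lines_subset_joins[OF cross] right_in_join[of m t] m rho_subset_X w_q0_t_in_X(3) by blast+
qed

lemma plane_D_t_inter_rho:
  assumes c: "c \<in> joins D (join m t)" "c \<in> \<rho>"
  shows "c = m"
proof (rule ccontr)
  assume "c \<noteq> m"
  note cross = crossing_D_t(1) and cross' = crossing_rho_line_D[OF c(2) \<open>c \<noteq> m\<close>]
  have "join m c \<subseteq> joins D (join m t)"
    using flat_join[OF joins_flat[OF cross]] crossing_D_t(2) D_line(2) c(1) by blast
  then have "joins D (join m t) = joins (join m c) D"
    using span_plane_eq_joins[OF span_planeI[OF cross] cross'(1)] crossing_D_t(2) by blast
  then show False using cross'(2) crossing_D_t(3) t(2) by blast
qed

lemma crossing_w_q0:
  assumes y: "y \<in> D"
  shows "crossing w (join w q0) (join w y)" "{w, q0, y, t} \<subseteq> joins (join w q0) (join w y)"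
proof -
  have yX: "y \<in> X" using y line_subset[OF D_line(1)] by blast
  have "w \<noteq> q0" using w q0(2) by blast
  then show cross: "crossing w (join w q0) (join w y)"
    using crossing_joins[OF w_q0_t_in_X(1,2) yX] wq0 y by blast
  show "{w, q0, y, t} \<subseteq> joins (join w q0) (join w y)"
    using points_in_joins[OF w_q0_t_in_X(1,2) yX] lines_subset_joins(1)[OF cross] t(1) by blast
qed

lemma m_off_plane_w_q0:
  assumes y: "y \<in> D" "y \<noteq> m"
  shows "m \<notin> joins (join w q0) (join w y)"
proof
  assume m\<tau>: "m \<in> joins (join w q0) (join w y)"
  note cross = crossing_w_q0[OF y(1)]
  note \<tau> = joins_flat[OF cross(1)]
  have "D \<subseteq> joins (join w q0) (join w y)"
    using flat_join[OF \<tau> m\<tau>, of y] join_eq_line[OF D_line(1,2) y(1) y(2)[symmetric]] cross(2)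
    by blast
  moreover have "w \<noteq> m" "w \<notin> D"
    using wq0 left_in_join[OF w_q0_t_in_X(1,2)] D_line(2) by blast+
  then have crossD: "crossing m (join m w) D" using crossing_rho_line_D(1)[OF w] by blast
  moreover have "join m w \<subseteq> joins (join w q0) (join w y)" using flat_join[OF \<tau> m\<tau>] cross(2) by blast
  ultimately have "joins (join w q0) (join w y) = joins (join m w) D"
    using span_plane_eq_joins[OF span_planeI[OF cross(1)] crossD] by blast
  then show False using crossing_rho_line_D(2)[OF w \<open>w \<noteq> m\<close>] cross(2) t(2) by blast
qed

lemma plane_w_q0_meets_rho:
  assumes y: "y \<in> D" "y \<noteq> m"
  obtains c where "c \<in> joins (join w q0) (join w y)" "c \<in> \<rho>" "c \<noteq> w"
proof (rule ccontr)
  assume "\<not> thesis"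
  then have sub: "joins (join w q0) (join w y) \<inter> \<rho> \<subseteq> {w}" using that by blast
  note cross = crossing_w_q0[OF y(1)]
  have X: "y \<in> X" "w \<in> X" "q0 \<in> X" using y(1) line_subset[OF D_line(1)] w_q0_t_in_X by blast+
  have "y \<noteq> w" "y \<noteq> q0" using D_inter_rho y w wq0 right_in_join[OF X(2,3)] by blast+
  moreover have "join y w \<noteq> join y q0"
  proof
    assume "join y w = join y q0"
    then have "q0 \<in> join y w" using right_in_join[OF X(1,3)] by simp
    moreover have "w \<noteq> q0" using w q0(2) by blast
    ultimately have "join w q0 = join y w"
      using join_eq_join[OF X(1,2) right_in_join[OF X(1,2)]] by simp
    then show False using wq0 y(1) left_in_join[OF X(1,2)] by blast
  qed
  ultimately have cross': "crossing y (join y w) (join y q0)"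
    using join_line X unfolding crossing_def by metis
  have "join y w \<subseteq> joins \<rho> D" "join y q0 \<subseteq> joins \<rho> D"
    using join_D_subset_joins[OF y(1)] rho_subset_joins w q0(1) by blast+
  moreover have "join y w \<subseteq> joins (join w q0) (join w y)" "join y q0 \<subseteq> joins (join w q0) (join w y)"
    using flat_join[OF joins_flat[OF cross(1)]] cross(2) by blast+
  ultimately have "joins (join w q0) (join w y) \<subseteq> joins \<rho> D"
    using span_plane_subset_joins[OF span_planeI[OF cross(1)] w sub cross'] by blast
  then show False using cross(2) t(2) by blast
qed

context
  fixes y1 y2 c2 :: 'a and \<tau> :: "'a set" and \<sigma> :: "'a \<Rightarrow> 'a set"
  defines "\<tau> \<equiv> joins (join w q0) (join w y2)" and "\<sigma> \<equiv> \<lambda>p. joins (join t p) (join t y1)"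
  assumes y1: "y1 \<in> D" "y1 \<noteq> m" and y2: "y2 \<in> D" "y2 \<noteq> m" "y2 \<noteq> y1"
    and c2: "c2 \<in> \<tau>" "c2 \<in> \<rho>" "c2 \<noteq> w"
begin

lemma tau_plane: "span_plane \<tau>" "flat X \<L> \<tau>" "{w, q0, y2, t} \<subseteq> \<tau>"
  using span_planeI joins_flat crossing_w_q0[OF y2(1)] unfolding \<tau>_def by blast+

lemma y1_off_tau: "y1 \<notin> \<tau>"
proof
  assume "y1 \<in> \<tau>"
  then have "join y2 y1 \<subseteq> \<tau>" using flat_join[OF tau_plane(2)] tau_plane(3) by blast
  then show False
    using join_eq_line[OF D_line(1) y2(1) y1(1) y2(3)] D_line(2) m_off_plane_w_q0[OF y2(1,2)] \<tau>_def
    by blast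
qed

lemma tau_inter_rho: "\<tau> \<inter> \<rho> = join w c2"
proof -
  have "\<tau> \<noteq> \<rho>" using tau_plane(3) D_inter_rho y2 by blast
  then show ?thesis
    using span_plane_inter[OF tau_plane(1) \<rho> _ _ w _ c2(2) c2(3)[symmetric]] tau_plane(3) c2(1)
    by blast
qed

lemma join_t_subset_joins:
  assumes p: "p \<in> join w c2" and s: "s \<in> join t p" "s \<noteq> t"
  shows "s \<in> joins \<rho> D"
proof (rule ccontr)
  assume sR: "s \<notin> joins \<rho> D"
  have p\<rho>: "p \<in> \<rho>" "p \<in> \<tau>" using p tau_inter_rho by blast+
  have X: "p \<in> X" "y2 \<in> X" using p\<rho> rho_subset_X y2(1) line_subset[OF D_line(1)] by blast+
  have "t \<noteq> p" using p\<rho> t_notin_rho_D by blast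
  have sX: "s \<in> X" using s(1) join_subset_X[OF w_q0_t_in_X(3) X(1)] by blast
  have s\<tau>: "s \<in> \<tau>" using flat_join[OF tau_plane(2) _ p\<rho>(2)] tau_plane(3) s(1) by blast
  have "y2 \<noteq> s" "y2 \<noteq> t" using sR D_subset_joins y2(1) t_notin_rho_D(2) by blast+
  then have L: "join y2 s \<in> \<L>" "y2 \<in> join y2 s" "join y2 t \<in> \<L>" "y2 \<in> join y2 t"
    using join_line[OF X(2) sX] join_line[OF X(2) w_q0_t_in_X(3)] by auto
  have k: "join w c2 \<in> \<L>" "join w c2 \<subseteq> \<tau>"
    using join_in_lines[OF w_q0_t_in_X(1)] c2 rho_subset_X tau_inter_rho by blast+
  have "join y2 s \<subseteq> \<tau>" "join y2 t \<subseteq> \<tau>"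
    using flat_join[OF tau_plane(2)] tau_plane(3) s\<tau> by blast+
  moreover have "join y2 s \<inter> join w c2 = {}" "join y2 t \<inter> join w c2 = {}"
    using join_D_misses_rho[OF y2(1,2) sX sR] join_D_misses_rho[OF y2(1,2) w_q0_t_in_X(3) t(2)]
      tau_inter_rho by blast+
  ultimately have "join y2 s = join y2 t"
    using parallel_unique[OF tau_plane(1) k L(1,2) _ _ L(3,4)] by blast
  then have "s \<in> join y2 t" using right_in_join[OF X(2) sX] by simp
  moreover have "join t p \<noteq> join y2 t"
    using join_D_misses_rho[OF y2(1,2) w_q0_t_in_X(3) t(2)] p\<rho>(1)
      right_in_join[OF w_q0_t_in_X(3) X(1)] by blast
  moreover have "t \<in> join t p" "t \<in> join y2 t"
    using left_in_join[OF w_q0_t_in_X(3) X(1)] right_in_join[OF X(2) w_q0_t_in_X(3)] by auto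
  ultimately show False
    using lines_eq[OF join_in_lines[OF w_q0_t_in_X(3) X(1) \<open>t \<noteq> p\<close>] L(3) s(1)] s(2) by blast
qed

lemma sigma_plane:
  assumes p: "p \<in> join w c2"
  shows "crossing t (join t p) (join t y1)" "span_plane (\<sigma> p)" "flat X \<L> (\<sigma> p)" "{t, p, y1} \<subseteq> \<sigma> p"
proof -
  have p\<rho>: "p \<in> \<rho>" "p \<in> \<tau>" using p tau_inter_rho by blast+
  have X: "p \<in> X" "y1 \<in> X" using p\<rho> rho_subset_X y1(1) line_subset[OF D_line(1)] by blast+
  have "join t p \<subseteq> \<tau>" using flat_join[OF tau_plane(2)] tau_plane(3) p\<rho>(2) by blast
  then have "y1 \<notin> join t p" using y1_off_tau by blast
  moreover have "t \<noteq> p" using p\<rho> t_notin_rho_D by blast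
  ultimately show cross: "crossing t (join t p) (join t y1)"
    using crossing_joins w_q0_t_in_X(3) X by blast
  show "span_plane (\<sigma> p)" "flat X \<L> (\<sigma> p)"
    using span_planeI[OF cross] joins_flat[OF cross] \<sigma>_def by auto
  show "{t, p, y1} \<subseteq> \<sigma> p" using points_in_joins[OF w_q0_t_in_X(3) X] \<sigma>_def by auto
qed

lemma sigma_meets_rho_twice:
  assumes p: "p \<in> join w c2"
  obtains c where "c \<in> \<sigma> p" "c \<in> \<rho>" "c \<noteq> p"
proof (rule ccontr)
  assume "\<not> thesis"
  then have sub: "\<sigma> p \<inter> \<rho> \<subseteq> {p}" using that by blast
  note \<sigma> = sigma_plane[OF p]
  have p\<rho>: "p \<in> \<rho>" "p \<in> \<tau>" using p tau_inter_rho by blast+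
  have X: "p \<in> X" "y1 \<in> X" using p\<rho> rho_subset_X y1(1) line_subset[OF D_line(1)] by blast+
  have "t \<noteq> p" using p\<rho> t_notin_rho_D by blast
  then obtain s where s: "s \<in> join t p" "s \<noteq> t" "s \<noteq> p"
    using line_fourth_point[OF join_in_lines[OF w_q0_t_in_X(3) X(1)]] by blast
  have sX: "s \<in> X" using s(1) join_subset_X[OF w_q0_t_in_X(3) X(1)] by blast
  have sR: "s \<in> joins \<rho> D" using join_t_subset_joins[OF p s(1,2)] .
  have "join t p \<subseteq> \<tau>" using flat_join[OF tau_plane(2)] tau_plane(3) p\<rho>(2) by blast
  then have y1tp: "y1 \<notin> join t p" using y1_off_tau by blast
  then have "y1 \<noteq> p" "y1 \<noteq> s" using s(1) right_in_join[OF w_q0_t_in_X(3) X(1)] by blast+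
  moreover have "join y1 p \<noteq> join y1 s"
  proof
    assume "join y1 p = join y1 s"
    then have "s \<in> join y1 p" using right_in_join[OF X(2) sX] by simp
    then have "join t p = join y1 p"
      using join_eq_join[OF X(2,1) _ right_in_join[OF X(2,1)] s(3)]
        join_eq_join[OF w_q0_t_in_X(3) X(1) s(1) right_in_join[OF w_q0_t_in_X(3) X(1)] s(3)] by simp
    then show False using y1tp left_in_join[OF X(2,1)] by simp
  qed
  ultimately have cross: "crossing y1 (join y1 p) (join y1 s)"
    using join_line[OF X(2,1)] join_line[OF X(2) sX] unfolding crossing_def by blast
  have "s \<in> \<sigma> p" using flat_join[OF \<sigma>(3)] \<sigma>(4) s(1) by blast
  then have "join y1 p \<subseteq> \<sigma> p" "join y1 s \<subseteq> \<sigma> p" using flat_join[OF \<sigma>(3)] \<sigma>(4) by blast+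
  moreover have "join y1 p \<subseteq> joins \<rho> D" "join y1 s \<subseteq> joins \<rho> D"
    using join_D_subset_joins[OF y1(1)] rho_subset_joins p\<rho> sR by blast+
  ultimately have "\<sigma> p \<subseteq> joins \<rho> D" using span_plane_subset_joins[OF \<sigma>(2) p\<rho>(1) sub cross] by blast
  then show False using \<sigma>(4) t(2) by blast
qed

lemma sigma_inter_rho:
  assumes p: "p \<in> join w c2"
  shows "\<sigma> p \<inter> \<rho> \<in> \<L>" "p \<in> \<sigma> p \<inter> \<rho>"
proof -
  note \<sigma> = sigma_plane[OF p]
  have p\<rho>: "p \<in> \<rho>" using p tau_inter_rho by blast
  obtain c where c: "c \<in> \<sigma> p" "c \<in> \<rho>" "c \<noteq> p" using sigma_meets_rho_twice[OF p] .
  have "\<sigma> p \<noteq> \<rho>" using \<sigma>(4) t_notin_rho_D by blast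
  then have "\<sigma> p \<inter> \<rho> = join p c"
    using span_plane_inter[OF \<sigma>(2) \<rho> _ _ p\<rho> c(1,2) c(3)[symmetric]] \<sigma>(4) by blast
  then show "\<sigma> p \<inter> \<rho> \<in> \<L>" "p \<in> \<sigma> p \<inter> \<rho>"
    using join_in_lines c rho_subset_X \<sigma>(4) p\<rho> by auto
qed

lemma sigma_inter_rho_ne:
  assumes p: "p \<in> join w c2"
  shows "\<sigma> p \<inter> \<rho> \<noteq> join w c2"
proof
  assume eq: "\<sigma> p \<inter> \<rho> = join w c2"
  note \<sigma> = sigma_plane[OF p]
  have X: "w \<in> X" "c2 \<in> X" using w c2(2) rho_subset_X by blast+
  have "{w, c2, t} \<subseteq> \<sigma> p" "{w, c2, t} \<subseteq> \<tau>"
    using eq \<sigma>(4) left_in_join[OF X] right_in_join[OF X] tau_plane(3) c2(1) by auto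
  moreover have "t \<notin> join w c2" using eq t_notin_rho_D by blast
  ultimately have "\<sigma> p = \<tau>" using span_plane_eq[OF \<sigma>(2) tau_plane(1)] c2(3) by metis
  then show False using \<sigma>(4) y1_off_tau by blast
qed

lemma sigma_inter_rho_disjoint:
  assumes p: "p \<in> join w c2" and p': "p' \<in> join w c2" "p \<noteq> p'"
  shows "(\<sigma> p \<inter> \<rho>) \<inter> (\<sigma> p' \<inter> \<rho>) = {}"
proof (rule ccontr)
  assume "(\<sigma> p \<inter> \<rho>) \<inter> (\<sigma> p' \<inter> \<rho>) \<noteq> {}"
  then obtain z where z: "z \<in> \<sigma> p" "z \<in> \<sigma> p'" "z \<in> \<rho>" by blast
  have X: "y1 \<in> X" using y1(1) line_subset[OF D_line(1)] by blast
  have "z \<notin> join y1 t" using join_D_misses_rho[OF y1 w_q0_t_in_X(3) t(2)] z(3) by blast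
  moreover have "y1 \<noteq> t" using y1(1) t_notin_rho_D(2) by blast
  ultimately have "\<sigma> p = \<sigma> p'"
    using span_plane_eq[OF sigma_plane(2)[OF p] sigma_plane(2)[OF p'(1)], of y1 t z]
      sigma_plane(4)[OF p] sigma_plane(4)[OF p'(1)] z(1,2) by blast
  then have "p' \<in> \<sigma> p \<inter> \<rho>" using sigma_inter_rho(2)[OF p'(1)] by simp
  then have "\<sigma> p \<inter> \<rho> = join w c2"
    using lines_eq[OF sigma_inter_rho(1)[OF p] _ sigma_inter_rho(2)[OF p] p _ p'] join_in_lines
      w c2 rho_subset_X by blast
  then show False using sigma_inter_rho_ne[OF p] by simp
qed

lemma m_notin_sigma_inter_rho:
  assumes p: "p \<in> join w c2"
  shows "m \<notin> \<sigma> p \<inter> \<rho>"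
proof
  assume m\<sigma>: "m \<in> \<sigma> p \<inter> \<rho>"
  have "t \<notin> join m y1"
    using join_eq_line[OF D_line(1,2) y1(1) y1(2)[symmetric]] t_notin_rho_D(2) by simp
  moreover have "{m, y1, t} \<subseteq> joins D (join m t)" using crossing_D_t(2,3) D_line(2) y1(1) by blast
  moreover have "{m, y1, t} \<subseteq> \<sigma> p" using m\<sigma> sigma_plane(4)[OF p] by blast
  ultimately have "\<sigma> p = joins D (join m t)"
    using span_plane_eq[OF sigma_plane(2)[OF p] span_planeI[OF crossing_D_t(1)]] y1(2) by metis
  then have "\<sigma> p \<inter> \<rho> \<subseteq> {m}" using plane_D_t_inter_rho by blast
  moreover obtain x where "x \<in> \<sigma> p \<inter> \<rho>" "x \<noteq> m"
    using line_other_point[OF sigma_inter_rho(1)[OF p]] by blast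
  ultimately show False by blast
qed

lemma parallel_class_contradiction: False
proof -
  have X: "w \<in> X" "c2 \<in> X" using w c2(2) rho_subset_X by blast+
  have k: "join w c2 \<in> \<L>" "w \<in> join w c2" "join w c2 \<subseteq> \<rho>"
    using join_line[OF X c2(3)[symmetric]] flat_join[OF rho_flat w c2(2)] by auto
  define K where "K = \<sigma> w \<inter> \<rho>"
  have K: "K \<in> \<L>" "w \<in> K" "K \<subseteq> \<rho>" "m \<notin> K"
    using sigma_inter_rho[OF k(2)] m_notin_sigma_inter_rho[OF k(2)] K_def by auto
  obtain K' where K': "K' \<in> \<L>" "m \<in> K'" "K' \<subseteq> \<rho>" "K' \<inter> K = {}"
    using parallel_exists[OF rho_flat K(1,3) m K(4)] by blast
  have "join w c2 \<noteq> K" using sigma_inter_rho_ne[OF k(2)] K_def by simp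
  then obtain p where p: "p \<in> join w c2" "p \<in> K'"
    using nonparallel_lines_meet[OF \<rho> K'(1,3) k K(1,2,3)] K'(4) by blast
  have "p \<noteq> w" using p(2) K'(4) K(2) by blast
  then have "(\<sigma> p \<inter> \<rho>) \<inter> K = {}" using sigma_inter_rho_disjoint[OF p(1) k(2)] K_def by simp
  then have "\<sigma> p \<inter> \<rho> = K'"
    using parallel_unique[OF \<rho> K(1,3) sigma_inter_rho[OF p(1)] _ _ K'(1) p(2) K'(3)] K'(4) by blast
  then show False using m_notin_sigma_inter_rho[OF p(1)] K'(2) by simp
qed

end

lemma point_off_joins_contradiction: False
proof -
  obtain y1 where y1: "y1 \<in> D" "y1 \<noteq> m" using line_other_point[OF D_line(1)] by blast
  obtain y2 where y2: "y2 \<in> D" "y2 \<noteq> m" "y2 \<noteq> y1" using line_fourth_point[OF D_line(1)] by blast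
  obtain c2 where "c2 \<in> joins (join w q0) (join w y2)" "c2 \<in> \<rho>" "c2 \<noteq> w"
    using plane_w_q0_meets_rho[OF y2(1,2)] by blast
  then show False using parallel_class_contradiction[OF y1 y2] by blast
qed

end

lemma join_rho_point_subset_joins:
  assumes "q0 \<in> joins \<rho> D" "q0 \<notin> \<rho>" "w \<in> \<rho>" "join w q0 \<inter> D = {}"
  shows "join w q0 \<subseteq> joins \<rho> D"
  using point_off_joins_contradiction[OF assms(1-3) _ _ assms(4)] by blast

lemma joins_plane_line_flat: "flat X \<L> (joins \<rho> D)"
  unfolding flat_def
proof (intro conjI ballI impI)
  show "joins \<rho> D \<subseteq> X" using joins_rho_D_subset_X .
  fix q r assume q: "q \<in> joins \<rho> D" and r: "r \<in> joins \<rho> D" and "q \<noteq> r"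
  have X: "q \<in> X" "r \<in> X" using q r joins_rho_D_subset_X by blast+
  note N = join_line[OF X \<open>q \<noteq> r\<close>]
  consider "join q r \<inter> \<rho> = {}" | "join q r \<inter> D \<noteq> {}"
    | w where "w \<in> join q r" "w \<in> \<rho>" "join q r \<inter> D = {}"
    by blast
  then show "join q r \<subseteq> joins \<rho> D"
  proof cases
    case 1 then show ?thesis
      using line_off_rho_subset_joins[OF N(1) _ N(2) q N(3) r \<open>q \<noteq> r\<close>] by blast
  next
    case 2
    then obtain y where y: "y \<in> join q r" "y \<in> D" by blast
    obtain x where x: "x \<in> {q, r}" "x \<noteq> y" using \<open>q \<noteq> r\<close> by blast
    then have "join y x = join q r" using join_eq_line[OF N(1) y(1)] N(2,3) by auto
    then show ?thesis using join_D_subset_joins[OF y(2)] x q r by blast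
  next
    case 3
    obtain q0 where q0: "q0 \<in> {q, r}" "q0 \<noteq> w" using \<open>q \<noteq> r\<close> by blast
    then have eq: "join w q0 = join q r" using join_eq_line[OF N(1) 3(1)] N(2,3) by auto
    show ?thesis
    proof (cases "q0 \<in> \<rho>")
      case True then show ?thesis
        using flat_join[OF rho_flat 3(2) True] eq rho_subset_joins by blast
    next
      case False then show ?thesis
        using join_rho_point_subset_joins[of q0 w] q0 q r 3 eq by blast
    qed
  qed
qed

end

lemma flat_joins_through:
  assumes A: "flat X \<L> A" "a \<in> A" and b: "b \<in> X" "b \<notin> A" and a12: "a1 \<in> A" "a2 \<in> A"
  obtains F where "F \<subseteq> A" "a1 \<in> F" "a2 \<in> F" "flat X \<L> (joins F (join a b))"
proof -
  have X: "a \<in> X" "a1 \<in> X" "a2 \<in> X" using A a12 flat_subset_X by blast+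
  have crossing_line: "crossing a (join a c) (join a b)" if "c \<in> A" "c \<noteq> a" for c
    using crossing_joins[OF X(1) _ b(1)] that A flat_join[OF A(1)] b(2) flat_subset_X by blast
  consider "a1 = a" "a2 = a" | c where "c \<in> A" "c \<noteq> a" "a1 \<in> join a c" "a2 \<in> join a c"
    | "a1 \<noteq> a" "a2 \<notin> join a a1"
  proof -
    consider "a1 = a" "a2 = a" | "a1 = a" "a2 \<noteq> a"
      | "a1 \<noteq> a" "a2 \<in> join a a1" | "a1 \<noteq> a" "a2 \<notin> join a a1"
      by blast
    then show thesis
      using that a12 left_in_join[OF X(1)] right_in_join[OF X(1)] X by cases metis+
  qed
  then show thesis
  proof cases
    case 1
    have "joins {a} (join a b) = join a b"
    proof
      show "joins {a} (join a b) \<subseteq> join a b"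
        using joins_subset_flat[OF flat_line[OF X(1) b(1)]] X(1) b(1) by simp
      show "join a b \<subseteq> joins {a} (join a b)"
        using subset_joins[OF join_subset_X[OF X(1) b(1)], of a "{a}"] joins_commute X(1) by simp
    qed
    then show ?thesis using that[of "{a}"] 1 A(2) flat_line[OF X(1) b(1)] by simp
  next
    case 2
    then show ?thesis
      using that[of "join a c"] flat_join[OF A(1) A(2) 2(1)] joins_flat[OF crossing_line[OF 2(1,2)]]
      by blast
  next
    case 3
    have cross: "crossing a (join a a1) (join a a2)"
      using crossing_joins[OF X 3(1)[symmetric] 3(2)] .
    have \<rho>A: "joins (join a a1) (join a a2) \<subseteq> A"
      using joins_subset_flat[OF A(1)] flat_join[OF A(1) A(2)] a12 by blast
    have "a \<in> joins (join a a1) (join a a2)" "b \<notin> joins (join a a1) (join a a2)"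
      using points_in_joins[OF X] \<rho>A b(2) by blast+
    then have "flat X \<L> (joins (joins (join a a1) (join a a2)) (join a b))"
      using joins_plane_line_flat[OF span_planeI[OF cross] _ b(1) _ refl] by blast
    then show ?thesis using that \<rho>A points_in_joins[OF X] by blast
  qed
qed

lemma joins_flat_line_flat:
  assumes A: "flat X \<L> A" "a \<in> A" and b: "b \<in> X" "b \<notin> A"
  shows "flat X \<L> (joins A (join a b))"
  unfolding flat_def
proof (intro conjI ballI impI)
  have aX: "a \<in> X" using A flat_subset_X by blast
  show "joins A (join a b) \<subseteq> X"
    using joins_subset_X[OF flat_subset_X[OF A(1)] join_subset_X[OF aX b(1)]] .
  fix q r assume q: "q \<in> joins A (join a b)" and r: "r \<in> joins A (join a b)" and "q \<noteq> r"
  obtain a1 y1 where a1: "a1 \<in> A" "y1 \<in> join a b" "q \<in> join a1 y1" using q by (rule joinsE)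
  obtain a2 y2 where a2: "a2 \<in> A" "y2 \<in> join a b" "r \<in> join a2 y2" using r by (rule joinsE)
  obtain F where F: "F \<subseteq> A" "a1 \<in> F" "a2 \<in> F" "flat X \<L> (joins F (join a b))"
    using flat_joins_through[OF A b a1(1) a2(1)] .
  have "join q r \<subseteq> joins F (join a b)"
    using flat_join[OF F(4) joinsI[OF F(2) a1(2,3)] joinsI[OF F(3) a2(2,3)]] .
  then show "join q r \<subseteq> joins A (join a b)" using joins_mono[OF F(1) order_refl] by blast
qed

lemma hull_insert_eq_joins:
  assumes A: "flat X \<L> A" "a \<in> A" and b: "b \<in> X" "b \<notin> A"
  shows "hull X \<L> (A \<union> {b}) = joins A (join a b)"
proof
  have AX: "A \<subseteq> X" using flat_subset_X[OF A(1)] .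
  have aX: "a \<in> X" using A(2) AX by blast
  have ab: "a \<in> join a b" "b \<in> join a b" using aX b(1) by simp_all
  have "A \<subseteq> joins A (join a b)" using subset_joins[OF AX ab(1) aX] .
  moreover have "b \<in> joins A (join a b)" using joinsI[OF A(2) ab(2) ab(2)] .
  ultimately have "A \<union> {b} \<subseteq> joins A (join a b)" by blast
  then show "hull X \<L> (A \<union> {b}) \<subseteq> joins A (join a b)"
    by (rule hull_minimal[OF joins_flat_line_flat[OF A b]])
  have "A \<union> {b} \<subseteq> X" using AX b(1) by blast
  then have H: "flat X \<L> (hull X \<L> (A \<union> {b}))" by (rule hull_flat)
  have ab_hull: "a \<in> hull X \<L> (A \<union> {b})" "b \<in> hull X \<L> (A \<union> {b})"
    using hull_subset A(2) by blast+
  have "A \<subseteq> hull X \<L> (A \<union> {b})" using hull_subset by blast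
  moreover have "join a b \<subseteq> hull X \<L> (A \<union> {b})" using flat_join[OF H ab_hull] .
  ultimately show "joins A (join a b) \<subseteq> hull X \<L> (A \<union> {b})"
    using joins_subset_flat[OF H] by blast
qed

lemma regular: "regular X \<L>"
  unfolding regular_def
proof (intro allI impI)
  fix A a b assume "flat X \<L> A \<and> a \<in> A \<and> b \<in> X - A"
  then have "hull X \<L> (A \<union> {b}) = joins A (join a b)" using hull_insert_eq_joins by blast
  then show "hull X \<L> (A \<union> {b}) = (\<Union>y\<in>join a b. cone \<L> A y)"
    unfolding joins_def cone_def by blast
qed

end

theorem theorem4p1p1:
  fixes X :: "'a set" and \<L> :: "'a set set"
  assumes "liner X \<L>" and "four_long \<L>" and "affine_liner X \<L>"
  shows "playfair X \<L> \<and> regular X \<L>"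
proof -
  interpret four_long_affine_liner X \<L> using assms by unfold_locales
  show ?thesis using playfair regular by blast
qed

end
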